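(* Let $\overline{M}$ be a smooth manifold with boundary $\partial M$ and interior $M$, let $\nabla$ be a linear connection on $TM$ which is projectively compact of some order $\alpha\in(0,2]$, and let $R=R_{ab}{}^c{}_d$ be the curvature tensor of $\nabla$. Let $\rho$ be a local defining function for $\partial M$, $\rho_a=d\rho$, and let $\hat\nabla=\nabla+\frac{d\rho}{\alpha\rho}$ be the associated connection in the projective class (smooth up to the boundary). (i) If $\alpha=1$, then $\rho R$ admits a smooth extension to the boundary with boundary value $\delta^c_a\hat\nabla_b\rho_d-\delta^c_b\hat\nabla_a\rho_d$. (ii) If $\alpha\neq1$, then $\rho^2R$ admits a smooth extension to the boundary with boundary value equal to $\frac{1-\alpha}{\alpha^2}$ times the rank-one curvature tensor determined by the one-form $d\rho$, i.e. $\frac{1-\alpha}{\alpha^2}(\delta^c_a\rho_b\rho_d-\delta^c_b\rho_a\rho_d)$.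
   Context: A local defining function for $\partial M$ is a smooth $\rho:U\to[0,\infty)$, $U\subset\overline{M}$ open, with $\rho^{-1}(0)=U\cap\partial M$ and $d\rho\neq0$ on $U\cap\partial M$. For an affine connection $\nabla$ and one-form $\Upsilon$, $\nabla+\Upsilon$ denotes $\xi,\eta\mapsto\nabla_\xi\eta+\Upsilon(\xi)\eta+\Upsilon(\eta)\xi$. $\nabla$ is projectively compact of order $\alpha$ if each boundary point has a local defining function $\rho$ on a neighborhood $U$ such that $\nabla+\frac{d\rho}{\alpha\rho}$ extends smoothly from $U\cap M$ to $U$ (then this holds for every local defining function). Curvature convention: $(\nabla_a\nabla_b-\nabla_b\nabla_a)v^c=R_{ab}{}^c{}_dv^d$. For a one-form $\psi_a$, the rank-one curvature tensor determined by $\psi$ is $\delta^c_a\psi_b\psi_d-\delta^c_b\psi_a\psi_d$. *)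

theory Defs
  imports "HOL-Analysis.Analysis"
begin

(* Local-coordinate model: a chart of the manifold with boundary is a relatively
   open subset D of the closed half space {x. 0 <= x$i0}; its boundary part lies in
   {x. x$i0 = 0}. *)

(* C^infinity on a set (used on open sets): differentiable, and every directional
   derivative is again C^infinity (greatest fixed point = all orders). *)
coinductive Cinf :: "('a::euclidean_space) set \<Rightarrow> ('a \<Rightarrow> real) \<Rightarrow> bool" for S where
  "(\<forall>x\<in>S. (f has_derivative f' x) (at x)) \<Longrightarrow> (\<forall>v. Cinf S (\<lambda>x. f' x v)) \<Longrightarrow> Cinf S f"

definition smooth_upto :: "('a::euclidean_space) set \<Rightarrow> ('a \<Rightarrow> real) \<Rightarrow> bool" where
  "smooth_upto A f \<longleftrightarrow>
     (\<forall>p\<in>A. \<exists>W g. open W \<and> p \<in> W \<and> Cinf W g \<and> (\<forall>x\<in>A \<inter> W. g x = f x))"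

definition pd :: "'n::finite \<Rightarrow> (real^'n \<Rightarrow> real) \<Rightarrow> real^'n \<Rightarrow> real" where
  "pd i f x = frechet_derivative f (at x) (axis i 1)"

definition halfsp :: "'n::finite \<Rightarrow> (real^'n) set" where
  "halfsp i0 = {x. 0 \<le> x $ i0}"

definition bdry :: "'n::finite \<Rightarrow> (real^'n) set" where
  "bdry i0 = {x. x $ i0 = 0}"

definition kd :: "'n \<Rightarrow> 'n \<Rightarrow> real" where
  "kd i j = (if i = j then 1 else 0)"

definition ldf :: "'n::finite \<Rightarrow> (real^'n) set \<Rightarrow> (real^'n \<Rightarrow> real) \<Rightarrow> bool" where
  "ldf i0 U \<rho> \<longleftrightarrow> openin (top_of_set (halfsp i0)) U \<and> smooth_upto U \<rho> \<and>
     (\<forall>x\<in>U. 0 \<le> \<rho> x) \<and> (\<forall>x\<in>U. \<rho> x = 0 \<longleftrightarrow> x \<in> bdry i0) \<and>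
     (\<forall>p\<in>U \<inter> bdry i0. \<exists>W g. open W \<and> p \<in> W \<and> Cinf W g \<and> (\<forall>x\<in>U \<inter> W. g x = \<rho> x)
         \<and> (\<exists>i. pd i g p \<noteq> 0))"

(* Christoffel symbols: \<Gamma> i j k = \<Gamma>^k_{ij}, i.e. \<nabla>_{\<partial>_i} \<partial>_j = \<Sum>k. \<Gamma>^k_{ij} \<partial>_k.
   Christoffel symbols of \<nabla> + d\<rho>/(\<alpha>\<rho>). *)
definition shiftconn :: "real \<Rightarrow> (real^'n \<Rightarrow> real) \<Rightarrow> ('n::finite \<Rightarrow> 'n \<Rightarrow> 'n \<Rightarrow> real^'n \<Rightarrow> real)
     \<Rightarrow> 'n \<Rightarrow> 'n \<Rightarrow> 'n \<Rightarrow> real^'n \<Rightarrow> real" where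
  "shiftconn \<alpha> \<rho> \<Gamma> i j k x =
     \<Gamma> i j k x + (kd k j * pd i \<rho> x + kd k i * pd j \<rho> x) / (\<alpha> * \<rho> x)"

(* curvature R_{ab}^c_d in coordinates: R(\<partial>_a,\<partial>_b)\<partial>_d = \<Sum>c. R_{ab}^c_d \<partial>_c *)
definition curv :: "('n::finite \<Rightarrow> 'n \<Rightarrow> 'n \<Rightarrow> real^'n \<Rightarrow> real) \<Rightarrow> 'n \<Rightarrow> 'n \<Rightarrow> 'n \<Rightarrow> 'n \<Rightarrow> real^'n \<Rightarrow> real" where
  "curv \<Gamma> a b c d x = pd a (\<Gamma> b d c) x - pd b (\<Gamma> a d c) x
     + (\<Sum>e\<in>UNIV. \<Gamma> a e c x * \<Gamma> b d e x - \<Gamma> b e c x * \<Gamma> a d e x)"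

definition proj_compact :: "'n::finite \<Rightarrow> (real^'n) set \<Rightarrow> real \<Rightarrow> ('n \<Rightarrow> 'n \<Rightarrow> 'n \<Rightarrow> real^'n \<Rightarrow> real) \<Rightarrow> bool" where
  "proj_compact i0 D \<alpha> \<Gamma> \<longleftrightarrow>
     (\<forall>p\<in>D \<inter> bdry i0. \<exists>W \<sigma>. W \<subseteq> D \<and> p \<in> W \<and> ldf i0 W \<sigma> \<and>
        (\<forall>i j k. \<exists>F. smooth_upto W F \<and> (\<forall>x\<in>W - bdry i0. F x = shiftconn \<alpha> \<sigma> \<Gamma> i j k x)))"

end

theory Submission
  imports Defs
begin

text \<open>Near a boundary point, projective compactness provides a defining function \<sigma> for which the
  Christoffel symbols of \<nabla> + d\<sigma>/(\<alpha>\<sigma>) extend smoothly. By Hadamard's lemma any other defining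
  function is \<rho> = u\<sigma> with u smooth and nonvanishing, so the symbols G of \<nabla> + d\<rho>/(\<alpha>\<rho>) extend
  smoothly as well, and \<Gamma> = G - (\<delta> d\<rho> + d\<rho> \<delta>)/(\<alpha>\<rho>). Substituting this into the curvature formula
  writes R as a polynomial in 1/\<rho> with smooth coefficients. Its 1/\<rho>^2 part, coming from the
  derivative of 1/\<rho> and from the quadratic term, is (1/\<alpha>^2 - 1/\<alpha>) times the rank-one tensor of
  d\<rho>; so \<rho>^2 R is smooth with that boundary value. For \<alpha> = 1 this part vanishes and \<rho> R is
  smooth; in its boundary value the symmetry of G and of the second derivatives of \<rho> leaves only
  the terms of \<delta>^c_a \<nabla>'_b \<rho>_d - \<delta>^c_b \<nabla>'_a \<rho>_d, where \<nabla>' has symbols G.\<close>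


section \<open>Smooth functions on open sets\<close>

lemma CinfE:
  assumes "Cinf S f"
  obtains f' where "\<forall>x\<in>S. (f has_derivative f' x) (at x)" "\<forall>v. Cinf S (\<lambda>x. f' x v)"
  using assms by (rule Cinf.cases) blast

lemma Cinf_coinduct_set:
  assumes "f \<in> A"
    and "\<And>h. h \<in> A \<Longrightarrow> \<exists>h'. (\<forall>x\<in>S. (h has_derivative h' x) (at x)) \<and> (\<forall>v. (\<lambda>x. h' x v) \<in> A)"
  shows "Cinf S f"
  using assms(1) by (coinduction arbitrary: f rule: Cinf.coinduct) (use assms(2) in blast)

lemma Cinf_subset:
  assumes "Cinf S f" "T \<subseteq> S"
  shows "Cinf T f"
proof (rule Cinf_coinduct_set[of f "Collect (Cinf S)"])
  fix h assume "h \<in> Collect (Cinf S)"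
  then have "Cinf S h" by simp
  then obtain h' where "\<forall>x\<in>S. (h has_derivative h' x) (at x)" "\<forall>v. Cinf S (\<lambda>x. h' x v)"
    by (rule CinfE)
  then show "\<exists>h'. (\<forall>x\<in>T. (h has_derivative h' x) (at x)) \<and> (\<forall>v. (\<lambda>x. h' x v) \<in> Collect (Cinf S))"
    using assms(2) by blast
qed (use assms in simp)

lemma Cinf_cong:
  assumes "Cinf S f" "open S" "\<And>x. x \<in> S \<Longrightarrow> f x = g x"
  shows "Cinf S g"
proof (rule Cinf_coinduct_set[of g "{g. \<exists>f. Cinf S f \<and> (\<forall>x\<in>S. f x = g x)}"])
  fix h assume "h \<in> {g. \<exists>f. Cinf S f \<and> (\<forall>x\<in>S. f x = g x)}"
  then obtain f where f: "Cinf S f" "\<forall>x\<in>S. f x = h x" by blast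
  obtain f' where "\<forall>x\<in>S. (f has_derivative f' x) (at x)" "\<forall>v. Cinf S (\<lambda>x. f' x v)"
    using f(1) by (rule CinfE)
  note this f(2)
  then show "\<exists>h'. (\<forall>x\<in>S. (h has_derivative h' x) (at x)) \<and>
      (\<forall>v. (\<lambda>x. h' x v) \<in> {g. \<exists>f. Cinf S f \<and> (\<forall>x\<in>S. f x = g x)})"
    using assms(2) by (intro exI[of _ f']) (auto intro: has_derivative_transform_within_open)
qed (use assms in auto)

lemma Cinf_has_derivative: "Cinf S f \<Longrightarrow> x \<in> S \<Longrightarrow> (f has_derivative frechet_derivative f (at x)) (at x)"
proof -
  assume "Cinf S f" "x \<in> S"
  obtain f' where "\<forall>x\<in>S. (f has_derivative f' x) (at x)" using \<open>Cinf S f\<close> by (rule CinfE)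
  then have "(f has_derivative f' x) (at x)" using \<open>x \<in> S\<close> by blast
  then show ?thesis by (metis frechet_derivative_at)
qed

lemma Cinf_frechet_derivative:
  assumes "Cinf S f" "open S"
  shows "Cinf S (\<lambda>x. frechet_derivative f (at x) v)"
proof -
  obtain f' where f': "\<forall>x\<in>S. (f has_derivative f' x) (at x)" "\<forall>v. Cinf S (\<lambda>x. f' x v)"
    using assms(1) by (rule CinfE)
  show ?thesis
  proof (rule Cinf_cong[of S "\<lambda>x. f' x v"])
    fix x assume "x \<in> S"
    then show "f' x v = frechet_derivative f (at x) v" using f'(1) by (metis frechet_derivative_at)
  qed (use assms(2) f'(2) in auto)
qed

lemma Cinf_local:
  assumes "open S" "\<And>p. p \<in> S \<Longrightarrow> \<exists>W. open W \<and> p \<in> W \<and> Cinf W f"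
  shows "Cinf S f"
proof (rule Cinf_coinduct_set[of f "{f. \<forall>p\<in>S. \<exists>W. open W \<and> p \<in> W \<and> Cinf W f}"])
  fix h assume h: "h \<in> {f. \<forall>p\<in>S. \<exists>W. open W \<and> p \<in> W \<and> Cinf W f}"
  show "\<exists>h'. (\<forall>x\<in>S. (h has_derivative h' x) (at x)) \<and>
      (\<forall>v. (\<lambda>x. h' x v) \<in> {f. \<forall>p\<in>S. \<exists>W. open W \<and> p \<in> W \<and> Cinf W f})"
  proof (intro exI[of _ "\<lambda>x. frechet_derivative h (at x)"] conjI ballI allI CollectI)
    fix x assume "x \<in> S"
    then obtain W where "Cinf W h" "x \<in> W" using h by blast
    then show "(h has_derivative frechet_derivative h (at x)) (at x)"
      by (rule Cinf_has_derivative)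
  next
    fix v p assume "p \<in> S"
    then obtain W where "open W" "p \<in> W" "Cinf W h" using h by blast
    then show "\<exists>W. open W \<and> p \<in> W \<and> Cinf W (\<lambda>x. frechet_derivative h (at x) v)"
      using Cinf_frechet_derivative by blast
  qed
qed (use assms in auto)

lemma smooth_upto_subset:
  assumes "smooth_upto A f" "B \<subseteq> A"
  shows "smooth_upto B f"
  unfolding smooth_upto_def
proof
  fix p assume "p \<in> B"
  then obtain W g where "open W" "p \<in> W" "Cinf W g" "\<forall>x\<in>A \<inter> W. g x = f x"
    using assms unfolding smooth_upto_def by blast
  then show "\<exists>W g. open W \<and> p \<in> W \<and> Cinf W g \<and> (\<forall>x\<in>B \<inter> W. g x = f x)"
    using assms(2) by blast
qed

lemma Cinf_if_smooth_upto:
  assumes "open S" "smooth_upto S f"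
  shows "Cinf S f"
proof (rule Cinf_local[OF assms(1)])
  fix p assume "p \<in> S"
  then obtain W g where W: "open W" "p \<in> W" "Cinf W g" "\<forall>x\<in>S \<inter> W. g x = f x"
    using assms(2) unfolding smooth_upto_def by blast
  have "Cinf (S \<inter> W) g" using W(3) by (rule Cinf_subset) simp
  then have "Cinf (S \<inter> W) f" by (rule Cinf_cong) (use assms(1) W in auto)
  then show "\<exists>W. open W \<and> p \<in> W \<and> Cinf W f"
    using assms(1) W(1,2) \<open>p \<in> S\<close> by (intro exI[of _ "S \<inter> W"]) auto
qed

text \<open>By the product and quotient rules this set is closed under directional derivatives, so it
  lies in Cinf by coinduction; this gives the algebraic closure properties of Cinf at once.\<close>

inductive_set Cinf_alg :: "'a::euclidean_space set \<Rightarrow> ('a \<Rightarrow> real) set" for S where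
  Cinf: "Cinf S f \<Longrightarrow> f \<in> Cinf_alg S"
| const: "(\<lambda>x. c) \<in> Cinf_alg S"
| inverse: "Cinf S f \<Longrightarrow> \<forall>x\<in>S. f x \<noteq> 0 \<Longrightarrow> (\<lambda>x. inverse (f x)) \<in> Cinf_alg S"
| add: "f \<in> Cinf_alg S \<Longrightarrow> g \<in> Cinf_alg S \<Longrightarrow> (\<lambda>x. f x + g x) \<in> Cinf_alg S"
| mult: "f \<in> Cinf_alg S \<Longrightarrow> g \<in> Cinf_alg S \<Longrightarrow> (\<lambda>x. f x * g x) \<in> Cinf_alg S"

lemma Cinf_alg_derivative:
  assumes "h \<in> Cinf_alg S"
  shows "\<exists>h'. (\<forall>x\<in>S. (h has_derivative h' x) (at x)) \<and> (\<forall>v. (\<lambda>x. h' x v) \<in> Cinf_alg S)"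
  using assms
proof induction
  case (Cinf f)
  then obtain f' where "\<forall>x\<in>S. (f has_derivative f' x) (at x)" "\<forall>v. Cinf S (\<lambda>x. f' x v)"
    by (rule CinfE)
  then show ?case by (intro exI[of _ f']) (auto intro: Cinf_alg.Cinf)
next
  case (const c)
  show ?case by (intro exI[of _ "\<lambda>x v. 0"]) (auto intro: Cinf_alg.const)
next
  case (inverse f)
  obtain f' where f': "\<forall>x\<in>S. (f has_derivative f' x) (at x)" "\<forall>v. Cinf S (\<lambda>x. f' x v)"
    using inverse(1) by (rule CinfE)
  have "(\<lambda>x. - 1 * (inverse (f x) * f' x v * inverse (f x))) \<in> Cinf_alg S" for v
    using inverse f' by (intro Cinf_alg.intros) auto
  then show ?case using f' inverse(2)
    by (intro exI[of _ "\<lambda>x v. - (inverse (f x) * f' x v * inverse (f x))"])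
      (auto intro!: has_derivative_inverse)
next
  case (add f g)
  then obtain f' g' where "\<forall>x\<in>S. (f has_derivative f' x) (at x)" "\<forall>v. (\<lambda>x. f' x v) \<in> Cinf_alg S"
    "\<forall>x\<in>S. (g has_derivative g' x) (at x)" "\<forall>v. (\<lambda>x. g' x v) \<in> Cinf_alg S"
    by blast
  then show ?case
    by (intro exI[of _ "\<lambda>x v. f' x v + g' x v"]) (auto intro: has_derivative_add Cinf_alg.add)
next
  case (mult f g)
  then obtain f' g' where "\<forall>x\<in>S. (f has_derivative f' x) (at x)" "\<forall>v. (\<lambda>x. f' x v) \<in> Cinf_alg S"
    "\<forall>x\<in>S. (g has_derivative g' x) (at x)" "\<forall>v. (\<lambda>x. g' x v) \<in> Cinf_alg S"
    by blast
  then show ?case using mult(1,2)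
    by (intro exI[of _ "\<lambda>x v. f x * g' x v + f' x v * g x"])
      (auto intro!: has_derivative_mult Cinf_alg.add Cinf_alg.mult)
qed

lemma Cinf_alg_Cinf: "h \<in> Cinf_alg S \<Longrightarrow> Cinf S h"
  by (erule Cinf_coinduct_set) (rule Cinf_alg_derivative)

lemma Cinf_const: "Cinf S (\<lambda>x. c)"
  by (rule Cinf_alg_Cinf) (intro Cinf_alg.intros)

lemma Cinf_add: "Cinf S f \<Longrightarrow> Cinf S g \<Longrightarrow> Cinf S (\<lambda>x. f x + g x)"
  by (rule Cinf_alg_Cinf) (intro Cinf_alg.intros)

lemma Cinf_mult: "Cinf S f \<Longrightarrow> Cinf S g \<Longrightarrow> Cinf S (\<lambda>x. f x * g x)"
  by (rule Cinf_alg_Cinf) (intro Cinf_alg.intros)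

lemma Cinf_inverse:
  assumes "Cinf S f" "\<And>x. x \<in> S \<Longrightarrow> f x \<noteq> 0"
  shows "Cinf S (\<lambda>x. inverse (f x))"
  by (rule Cinf_alg_Cinf, rule Cinf_alg.inverse) (use assms in auto)

lemma Cinf_cmult: "Cinf S f \<Longrightarrow> Cinf S (\<lambda>x. c * f x)"
  by (rule Cinf_mult[OF Cinf_const])

lemma Cinf_diff: "Cinf S f \<Longrightarrow> Cinf S g \<Longrightarrow> Cinf S (\<lambda>x. f x - g x)"
  using Cinf_add[OF _ Cinf_cmult[of S g "- 1"], of f] by simp

lemma Cinf_divide:
  assumes "Cinf S f" "Cinf S g" "\<And>x. x \<in> S \<Longrightarrow> g x \<noteq> 0"
  shows "Cinf S (\<lambda>x. f x / g x)"
  using Cinf_mult[OF assms(1) Cinf_inverse[OF assms(2,3)]] by (simp add: divide_inverse)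

lemma Cinf_power: "Cinf S f \<Longrightarrow> Cinf S (\<lambda>x. f x ^ n)"
  by (induction n) (auto intro: Cinf_const Cinf_mult)

lemma Cinf_sum:
  assumes "\<And>i. i \<in> I \<Longrightarrow> Cinf S (f i)"
  shows "Cinf S (\<lambda>x. \<Sum>i\<in>I. f i x)"
proof (cases "finite I")
  case True
  then show ?thesis using assms by (induction I rule: finite_induct) (auto intro: Cinf_const Cinf_add)
qed (simp add: Cinf_const)

lemma Cinf_isCont: "Cinf S f \<Longrightarrow> x \<in> S \<Longrightarrow> isCont f x"
  using Cinf_has_derivative has_derivative_continuous by blast

lemma Cinf_continuous_on: "Cinf S f \<Longrightarrow> continuous_on S f"
  by (simp add: Cinf_isCont continuous_at_imp_continuous_on)

lemma Cinf_pd: "Cinf S f \<Longrightarrow> open S \<Longrightarrow> Cinf S (pd i f)"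
  unfolding pd_def by (rule Cinf_frechet_derivative)

lemma Cinf_differentiable: "Cinf S f \<Longrightarrow> x \<in> S \<Longrightarrow> f differentiable at x"
  using Cinf_has_derivative differentiable_def by blast


section \<open>Partial derivatives\<close>

lemma pd_cong_open:
  assumes "open V" "x \<in> V" "\<And>y. y \<in> V \<Longrightarrow> f y = g y"
  shows "pd i f x = pd i g x"
proof -
  have "(f has_derivative F) (at x) \<longleftrightarrow> (g has_derivative F) (at x)" for F
    using assms has_derivative_transform_within_open[of f F x UNIV V g]
      has_derivative_transform_within_open[of g F x UNIV V f] by auto
  then show ?thesis unfolding pd_def frechet_derivative_def by simp
qed

lemma pd_eq:
  fixes f :: "real^'n::finite \<Rightarrow> real"
  shows "(f has_derivative f') (at x) \<Longrightarrow> pd i f x = f' (axis i 1)"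
  unfolding pd_def by (metis frechet_derivative_at)

lemma pd_add:
  fixes f g :: "real^'n::finite \<Rightarrow> real"
  assumes "f differentiable at x" "g differentiable at x"
  shows "pd i (\<lambda>y. f y + g y) x = pd i f x + pd i g x"
  using pd_eq[OF has_derivative_add[OF assms[unfolded frechet_derivative_works]]]
  by (simp add: pd_def)

lemma pd_diff:
  fixes f g :: "real^'n::finite \<Rightarrow> real"
  assumes "f differentiable at x" "g differentiable at x"
  shows "pd i (\<lambda>y. f y - g y) x = pd i f x - pd i g x"
  using pd_eq[OF has_derivative_diff[OF assms[unfolded frechet_derivative_works]]]
  by (simp add: pd_def)

lemma pd_cmult:
  fixes f :: "real^'n::finite \<Rightarrow> real"
  assumes "f differentiable at x"
  shows "pd i (\<lambda>y. c * f y) x = c * pd i f x"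
  using pd_eq[OF has_derivative_mult_right[OF assms[unfolded frechet_derivative_works]]]
  by (simp add: pd_def)

lemma pd_mult:
  fixes f g :: "real^'n::finite \<Rightarrow> real"
  assumes "f differentiable at x" "g differentiable at x"
  shows "pd i (\<lambda>y. f y * g y) x = f x * pd i g x + pd i f x * g x"
  using pd_eq[OF has_derivative_mult[OF assms[unfolded frechet_derivative_works]]]
  by (simp add: pd_def)

lemma pd_divide:
  fixes f g :: "real^'n::finite \<Rightarrow> real"
  assumes "f differentiable at x" "g differentiable at x" "g x \<noteq> 0"
  shows "pd i (\<lambda>y. f y / g y) x = (pd i f x * g x - f x * pd i g x) / (g x)\<^sup>2"
  using pd_eq[OF has_derivative_divide[OF assms(1,2)[unfolded frechet_derivative_works] assms(3)]]
    assms(3)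
  by (simp add: pd_def field_simps power2_eq_square)

lemma pd_coord_mult:
  fixes h :: "real^'n::finite \<Rightarrow> real"
  assumes "h differentiable at x"
  shows "pd i (\<lambda>y. y $ j * h y) x = x $ j * pd i h x + kd i j * h x"
proof -
  have "((\<lambda>y::real^'n. y $ j) has_derivative (\<lambda>v. v $ j)) (at x)"
    by (rule bounded_linear_imp_has_derivative) (auto intro!: bounded_linear_intros)
  from pd_eq[OF has_derivative_mult[OF this assms[unfolded frechet_derivative_works]]]
  show ?thesis by (simp add: pd_def kd_def axis_def)
qed

lemma mean_value_along_line:
  fixes g :: "'a::real_normed_vector \<Rightarrow> real"
  assumes h: "h > 0"
    and d: "\<And>s. s \<in> {0..h} \<Longrightarrow> (g has_derivative D (z + s *\<^sub>R v)) (at (z + s *\<^sub>R v))"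
  shows "\<exists>\<xi>. 0 < \<xi> \<and> \<xi> < h \<and> g (z + h *\<^sub>R v) - g z = h * D (z + \<xi> *\<^sub>R v) v"
proof -
  define k where "k s = g (z + s *\<^sub>R v)" for s
  have k: "(k has_real_derivative D (z + s *\<^sub>R v) v) (at s)" if s: "s \<in> {0..h}" for s
  proof -
    have "((\<lambda>s. z + s *\<^sub>R v) has_derivative (\<lambda>t. t *\<^sub>R v)) (at s)"
      by (auto intro!: derivative_eq_intros)
    from has_derivative_compose[OF this d[OF s]]
    have "(k has_derivative (\<lambda>t. D (z + s *\<^sub>R v) (t *\<^sub>R v))) (at s)"
      unfolding k_def by simp
    moreover have "linear (D (z + s *\<^sub>R v))"
      using d[OF s] has_derivative_linear by blast
    then have "(\<lambda>t. D (z + s *\<^sub>R v) (t *\<^sub>R v)) = (*) (D (z + s *\<^sub>R v) v)"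
      by (auto simp: linear_scale mult.commute)
    ultimately show ?thesis by (simp add: has_field_derivative_def)
  qed
  have "continuous_on {0..h} k"
    using k by (meson DERIV_isCont continuous_at_imp_continuous_on)
  then obtain l \<xi> where m: "0 < \<xi>" "\<xi> < h" "DERIV k \<xi> :> l" "k h - k 0 = (h - 0) * l"
    using MVT[OF h] k by (metis atLeastAtMost_iff less_eq_real_def real_differentiable_def)
  moreover have "l = D (z + \<xi> *\<^sub>R v) v"
    using DERIV_unique[OF m(3) k] m(1,2) by auto
  ultimately show ?thesis by (intro exI[of _ \<xi>]) (simp add: k_def)
qed

lemma second_difference_mean_value:
  fixes f :: "real^'n \<Rightarrow> real"
  assumes f: "Cinf S f" "open S" and h: "h > 0"
    and square: "\<And>s t. s \<in> {0..h} \<Longrightarrow> t \<in> {0..h} \<Longrightarrow> x + s *\<^sub>R axis c 1 + t *\<^sub>R axis e 1 \<in> S"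
  shows "\<exists>s t. s \<in> {0..h} \<and> t \<in> {0..h} \<and>
    f (x + h *\<^sub>R axis c 1 + h *\<^sub>R axis e 1) - f (x + h *\<^sub>R axis c 1) - f (x + h *\<^sub>R axis e 1) + f x
      = h * (h * pd e (pd c f) (x + s *\<^sub>R axis c 1 + t *\<^sub>R axis e 1))"
proof -
  let ?c = "axis c 1 :: real^'n" and ?e = "axis e 1 :: real^'n"
  let ?D = "\<lambda>y. frechet_derivative f (at y)"
  define g where "g y = f (y + h *\<^sub>R ?e) - f y" for y
  have "\<exists>\<xi>. 0 < \<xi> \<and> \<xi> < h \<and> g (x + h *\<^sub>R ?c) - g x
      = h * (\<lambda>y v. ?D (y + h *\<^sub>R ?e) v - ?D y v) (x + \<xi> *\<^sub>R ?c) ?c"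
  proof (rule mean_value_along_line[OF h])
    fix s :: real assume s: "s \<in> {0..h}"
    have "((\<lambda>y. y + h *\<^sub>R ?e) has_derivative (\<lambda>v. v)) (at (x + s *\<^sub>R ?c))"
      by (auto intro!: derivative_eq_intros)
    from has_derivative_compose[OF this Cinf_has_derivative[OF f(1) square[OF s, of h]]]
    have "((\<lambda>y. f (y + h *\<^sub>R ?e)) has_derivative ?D (x + s *\<^sub>R ?c + h *\<^sub>R ?e)) (at (x + s *\<^sub>R ?c))"
      using h by simp
    moreover have "(f has_derivative ?D (x + s *\<^sub>R ?c)) (at (x + s *\<^sub>R ?c))"
      using Cinf_has_derivative[OF f(1) square[OF s, of 0]] h by simp
    ultimately show "(g has_derivative (\<lambda>v. ?D (x + s *\<^sub>R ?c + h *\<^sub>R ?e) v - ?D (x + s *\<^sub>R ?c) v))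
        (at (x + s *\<^sub>R ?c))"
      unfolding g_def by (rule has_derivative_diff)
  qed
  then obtain \<xi> where \<xi>: "0 < \<xi>" "\<xi> < h"
    "g (x + h *\<^sub>R ?c) - g x = h * (pd c f (x + \<xi> *\<^sub>R ?c + h *\<^sub>R ?e) - pd c f (x + \<xi> *\<^sub>R ?c))"
    by (auto simp: pd_def)
  have "\<exists>\<eta>. 0 < \<eta> \<and> \<eta> < h \<and> pd c f (x + \<xi> *\<^sub>R ?c + h *\<^sub>R ?e) - pd c f (x + \<xi> *\<^sub>R ?c)
      = h * frechet_derivative (pd c f) (at (x + \<xi> *\<^sub>R ?c + \<eta> *\<^sub>R ?e)) ?e"
  proof (rule mean_value_along_line[OF h])
    fix t :: real assume "t \<in> {0..h}"
    then show "(pd c f has_derivative frechet_derivative (pd c f) (at (x + \<xi> *\<^sub>R ?c + t *\<^sub>R ?e)))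
        (at (x + \<xi> *\<^sub>R ?c + t *\<^sub>R ?e))"
      using \<xi> by (intro Cinf_has_derivative[OF Cinf_pd[OF f]] square) auto
  qed
  then obtain \<eta> where "0 < \<eta>" "\<eta> < h" "pd c f (x + \<xi> *\<^sub>R ?c + h *\<^sub>R ?e) - pd c f (x + \<xi> *\<^sub>R ?c)
      = h * pd e (pd c f) (x + \<xi> *\<^sub>R ?c + \<eta> *\<^sub>R ?e)"
    by (auto simp: pd_def[of e])
  with \<xi> show ?thesis
    by (intro exI[of _ \<xi>] exI[of _ \<eta>]) (auto simp: g_def algebra_simps)
qed

lemma pd_commute:
  fixes f :: "real^'n \<Rightarrow> real"
  assumes f: "Cinf S f" "open S" and x: "x \<in> S"
  shows "pd a (pd b f) x = pd b (pd a f) x"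
proof (rule ccontr)
  let ?A = "pd a (pd b f)" and ?B = "pd b (pd a f)"
  assume ne: "?A x \<noteq> ?B x"
  define \<epsilon> where "\<epsilon> = \<bar>?A x - ?B x\<bar> / 2"
  have \<epsilon>: "\<epsilon> > 0" using ne by (simp add: \<epsilon>_def)
  obtain d1 where d1: "d1 > 0" "\<forall>z. dist z x < d1 \<longrightarrow> dist (?A z) (?A x) < \<epsilon>"
    using Cinf_isCont[OF Cinf_pd[OF Cinf_pd[OF f] f(2)] x] \<epsilon>
    unfolding continuous_at_eps_delta by blast
  obtain d2 where d2: "d2 > 0" "\<forall>z. dist z x < d2 \<longrightarrow> dist (?B z) (?B x) < \<epsilon>"
    using Cinf_isCont[OF Cinf_pd[OF Cinf_pd[OF f] f(2)] x] \<epsilon>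
    unfolding continuous_at_eps_delta by blast
  obtain d0 where d0: "d0 > 0" "ball x d0 \<subseteq> S" using f(2) x open_contains_ball by blast
  define h where "h = min d0 (min d1 d2) / 3"
  have h: "h > 0" using d0 d1 d2 by (simp add: h_def)
  have near: "dist (x + s *\<^sub>R axis c 1 + t *\<^sub>R axis e 1) x < min d0 (min d1 d2)"
    if "s \<in> {0..h}" "t \<in> {0..h}" for s t c e
  proof -
    have "dist (x + s *\<^sub>R axis c 1 + t *\<^sub>R axis e 1) x \<le> norm (s *\<^sub>R axis c (1::real) :: real^'n) + norm (t *\<^sub>R axis e (1::real) :: real^'n)"
      by (simp add: dist_norm add.assoc norm_triangle_ineq del: norm_scaleR)
    also have "\<dots> < min d0 (min d1 d2)" using that h by (simp add: h_def)
    finally show ?thesis .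
  qed
  have square: "x + s *\<^sub>R axis c 1 + t *\<^sub>R axis e 1 \<in> S" if "s \<in> {0..h}" "t \<in> {0..h}" for s t c e
    using near[OF that] d0(2) by (auto simp: dist_commute)
  obtain s1 t1 where st1: "s1 \<in> {0..h}" "t1 \<in> {0..h}"
    "f (x + h *\<^sub>R axis a 1 + h *\<^sub>R axis b 1) - f (x + h *\<^sub>R axis a 1) - f (x + h *\<^sub>R axis b 1) + f x
      = h * (h * ?B (x + s1 *\<^sub>R axis a 1 + t1 *\<^sub>R axis b 1))"
    using second_difference_mean_value[OF f h square, of a b] by blast
  obtain s2 t2 where st2: "s2 \<in> {0..h}" "t2 \<in> {0..h}"
    "f (x + h *\<^sub>R axis b 1 + h *\<^sub>R axis a 1) - f (x + h *\<^sub>R axis b 1) - f (x + h *\<^sub>R axis a 1) + f x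
      = h * (h * ?A (x + s2 *\<^sub>R axis b 1 + t2 *\<^sub>R axis a 1))"
    using second_difference_mean_value[OF f h square, of b a] by blast
  have "?B (x + s1 *\<^sub>R axis a 1 + t1 *\<^sub>R axis b 1) = ?A (x + s2 *\<^sub>R axis b 1 + t2 *\<^sub>R axis a 1)"
    using st1(3) st2(3) h by (simp add: algebra_simps)
  moreover have "dist (?B (x + s1 *\<^sub>R axis a 1 + t1 *\<^sub>R axis b 1)) (?B x) < \<epsilon>"
    using d2(2) near[OF st1(1,2)] by simp
  moreover have "dist (?A (x + s2 *\<^sub>R axis b 1 + t2 *\<^sub>R axis a 1)) (?A x) < \<epsilon>"
    using d1(2) near[OF st2(1,2)] by simp
  ultimately have "\<bar>?A x - ?B x\<bar> < 2 * \<epsilon>" by (simp add: dist_real_def)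
  then show False by (simp add: \<epsilon>_def)
qed


section \<open>Values on the boundary hyperplane\<close>

definition half_ball :: "'n::finite \<Rightarrow> real^'n \<Rightarrow> real \<Rightarrow> (real^'n) set" where
  "half_ball i0 p r = {x \<in> ball p r. 0 < x $ i0}"

lemma open_half_ball:
  fixes p :: "real^'n::finite"
  shows "open (half_ball i0 p r)"
proof -
  have "open {x::real^'n. 0 < x $ i0}"
    by (rule open_Collect_less) (intro continuous_intros)+
  moreover have "half_ball i0 p r = ball p r \<inter> {x. 0 < x $ i0}"
    by (auto simp: half_ball_def)
  ultimately show ?thesis by (simp add: open_Int)
qed

lemma half_ball_subset_ball: "half_ball i0 p r \<subseteq> ball p r"
  by (auto simp: half_ball_def)

lemma isCont_eq_on_half_ball:
  fixes f1 f2 :: "real^'n::finite \<Rightarrow> real"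
  assumes "isCont f1 p" "isCont f2 p" and p: "p $ i0 = 0" and "e > 0"
    and eq: "\<And>x. x \<in> half_ball i0 p e \<Longrightarrow> f1 x = f2 x"
  shows "f1 p = f2 p"
proof -
  define \<gamma> where "\<gamma> = (\<lambda>t::real. p + t *\<^sub>R axis i0 1)"
  have "isCont \<gamma> 0" "\<gamma> 0 = p" unfolding \<gamma>_def by (auto intro!: continuous_intros)
  then have lim: "((\<lambda>t. f (\<gamma> t)) \<longlongrightarrow> f p) (at_right 0)" if "isCont f p" for f :: "real^'n \<Rightarrow> real"
    using isCont_o2[where f=\<gamma> and a=0 and g=f] that unfolding isCont_def by (metis at_le subset_UNIV tendsto_mono)
  have "eventually (\<lambda>t. t \<in> {0<..<e}) (at_right (0::real))"
    using \<open>e > 0\<close> by (rule eventually_at_right_real)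
  then have ev: "eventually (\<lambda>t. f1 (\<gamma> t) = f2 (\<gamma> t)) (at_right 0)"
    by eventually_elim (use p in \<open>auto intro!: eq simp: half_ball_def \<gamma>_def dist_norm norm_axis_1\<close>)
  have "((\<lambda>t. f2 (\<gamma> t)) \<longlongrightarrow> f1 p) (at_right 0)"
    using tendsto_cong[OF ev] lim[OF assms(1)] by blast
  then show ?thesis
    using lim[OF assms(2)] tendsto_unique[of "at_right (0::real)"] by (simp add: trivial_limit_at_right_real)
qed

lemma Cinf_eq_on_half_ball:
  fixes f1 f2 :: "real^'n::finite \<Rightarrow> real"
  assumes "Cinf W1 f1" "p \<in> W1" "Cinf W2 f2" "p \<in> W2" "p $ i0 = 0" "e > 0"
    and "\<And>x. x \<in> half_ball i0 p e \<Longrightarrow> f1 x = f2 x"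
  shows "f1 p = f2 p"
  using isCont_eq_on_half_ball[OF Cinf_isCont[OF assms(1,2)] Cinf_isCont[OF assms(3,4)] assms(5-7)] .

lemma pd_eq_on_half_ball:
  fixes f1 f2 :: "real^'n::finite \<Rightarrow> real"
  assumes f1: "Cinf W1 f1" "open W1" "p \<in> W1" and f2: "Cinf W2 f2" "open W2" "p \<in> W2"
    and p: "p $ i0 = 0" and "e > 0"
    and eq: "\<And>x. x \<in> half_ball i0 p e \<Longrightarrow> f1 x = f2 x"
  shows "pd i f1 p = pd i f2 p"
proof (rule Cinf_eq_on_half_ball[OF Cinf_pd[OF f1(1,2)] f1(3) Cinf_pd[OF f2(1,2)] f2(3) p \<open>e > 0\<close>])
  fix x assume "x \<in> half_ball i0 p e"
  then show "pd i f1 x = pd i f2 x" using eq by (intro pd_cong_open[OF open_half_ball])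
qed


section \<open>Hadamard's lemma at the boundary hyperplane\<close>

text \<open>The point with normal coordinate scaled by t: it runs from the foot point of x on the
  hyperplane (t = 0) to x (t = 1).\<close>

definition bdry_segment :: "'n::finite \<Rightarrow> real^'n \<Rightarrow> real \<Rightarrow> real^'n" where
  "bdry_segment i0 x t = x - ((1 - t) * x $ i0) *\<^sub>R axis i0 1"

definition bdry_average :: "'n::finite \<Rightarrow> nat \<Rightarrow> (real^'n \<Rightarrow> real) \<Rightarrow> real^'n \<Rightarrow> real" where
  "bdry_average i0 k \<phi> x = integral {0..1} (\<lambda>t. t ^ k * \<phi> (bdry_segment i0 x t))"

lemma bdry_segment_in_ball:
  assumes p: "p $ i0 = 0" and x: "x \<in> ball p r" and t: "t \<in> {0..1}"
  shows "bdry_segment i0 x t \<in> ball p r"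
proof -
  have "norm (bdry_segment i0 x t - p) \<le> norm (x - p)"
  proof (rule norm_le_componentwise_cart)
    fix j
    have "\<bar>t * x $ i0\<bar> \<le> \<bar>x $ i0\<bar>"
      using t by (simp add: abs_mult mult_left_le_one_le)
    then show "norm ((bdry_segment i0 x t - p) $ j) \<le> norm ((x - p) $ j)"
      using p by (cases "j = i0") (auto simp: bdry_segment_def axis_def algebra_simps)
  qed
  then show ?thesis using x by (simp add: dist_norm norm_minus_commute)
qed

lemma bounded_linear_bdry_segment: "bounded_linear (\<lambda>v. bdry_segment i0 v t)"
  unfolding bdry_segment_def by (auto intro!: bounded_linear_intros)

lemma continuous_on_bdry_average_integrand:
  assumes "continuous_on (ball p r) \<phi>" "p $ i0 = 0"
  shows "continuous_on (ball p r \<times> {0..1}) (\<lambda>z. snd z ^ k * \<phi> (bdry_segment i0 (fst z) (snd z)))"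
proof -
  have "continuous_on (ball p r \<times> {0..1}) (\<lambda>z. \<phi> (bdry_segment i0 (fst z) (snd z)))"
  proof (rule continuous_on_compose2[OF assms(1)])
    show "continuous_on (ball p r \<times> {0..1}) (\<lambda>z. bdry_segment i0 (fst z) (snd z))"
      unfolding bdry_segment_def by (intro continuous_intros)
  qed (use bdry_segment_in_ball[OF assms(2)] in auto)
  then show ?thesis by (intro continuous_intros)
qed

lemma integrable_bdry_average:
  assumes "continuous_on (ball p r) \<phi>" "p $ i0 = 0" "x \<in> ball p r"
  shows "(\<lambda>t. t ^ k * \<phi> (bdry_segment i0 x t)) integrable_on {0..1}"
proof -
  have "continuous_on {0..1} (\<lambda>t. \<phi> (bdry_segment i0 x t))"
  proof (rule continuous_on_compose2[OF assms(1)])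
    show "continuous_on {0..1} (bdry_segment i0 x)"
      unfolding bdry_segment_def by (intro continuous_intros)
  qed (use bdry_segment_in_ball[OF assms(2,3)] in auto)
  then show ?thesis by (intro integrable_continuous_real continuous_intros)
qed

lemma continuous_on_bdry_average_derivative_integrand:
  fixes \<psi> :: "real^'n::finite \<Rightarrow> real"
  assumes \<psi>: "Cinf (ball p r) \<psi>" and p: "p $ i0 = 0"
  shows "continuous_on (ball p r \<times> {0..1}) (\<lambda>z. snd z ^ k
    * frechet_derivative \<psi> (at (bdry_segment i0 (fst z) (snd z))) (bdry_segment i0 b (snd z)))"
proof -
  let ?D = "\<lambda>z. frechet_derivative \<psi> (at z)"
  have eq: "?D (bdry_segment i0 x t) (bdry_segment i0 b t)
      = ?D (bdry_segment i0 x t) b - (1 - t) * b $ i0 * ?D (bdry_segment i0 x t) (axis i0 1)"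
    if "x \<in> ball p r" "t \<in> {0..1}" for x t
  proof -
    have "linear (?D (bdry_segment i0 x t))"
      using Cinf_has_derivative[OF \<psi> bdry_segment_in_ball[OF p that]] has_derivative_linear by blast
    then show ?thesis unfolding bdry_segment_def[of i0 b] by (simp add: linear_diff linear_scale)
  qed
  have "continuous_on (ball p r \<times> {0..1}) (\<lambda>z. snd z ^ k * ?D (bdry_segment i0 (fst z) (snd z)) b
      - (1 - snd z) * b $ i0 * (snd z ^ k * ?D (bdry_segment i0 (fst z) (snd z)) (axis i0 1)))"
    by (intro continuous_intros continuous_on_bdry_average_integrand p
        Cinf_continuous_on[OF Cinf_frechet_derivative[OF \<psi> open_ball]])
  then show ?thesis by (rule continuous_on_eq) (auto simp: eq algebra_simps)
qed

lemma has_derivative_bdry_average: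
  fixes \<psi> :: "real^'n::finite \<Rightarrow> real"
  assumes \<psi>: "Cinf (ball p r) \<psi>" and p: "p $ i0 = 0" and x0: "x0 \<in> ball p r"
  shows "(bdry_average i0 k \<psi> has_derivative
      (\<lambda>v. integral {0..1} (\<lambda>t. t ^ k * frechet_derivative \<psi> (at (bdry_segment i0 x0 t)) (bdry_segment i0 v t))))
    (at x0)"
proof -
  let ?B = "ball p r"
  let ?D = "\<lambda>z. frechet_derivative \<psi> (at z)"
  define F where "F x t = Blinfun (\<lambda>v. t ^ k * ?D (bdry_segment i0 x t) (bdry_segment i0 v t))" for x t
  have F: "blinfun_apply (F x t) = (\<lambda>v. t ^ k * ?D (bdry_segment i0 x t) (bdry_segment i0 v t))"
    if "x \<in> ?B" "t \<in> {0..1}" for x t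
  proof -
    have "bounded_linear (?D (bdry_segment i0 x t))"
      using Cinf_has_derivative[OF \<psi> bdry_segment_in_ball[OF p that]] has_derivative_bounded_linear
      by blast
    then show ?thesis unfolding F_def
      by (intro bounded_linear_Blinfun_apply bounded_linear_compose[OF bounded_linear_mult_right]
          bounded_linear_compose[OF _ bounded_linear_bdry_segment])
  qed
  have deriv: "((\<lambda>x. t ^ k * \<psi> (bdry_segment i0 x t)) has_derivative blinfun_apply (F x t)) (at x within ?B)"
    if "x \<in> ?B" "t \<in> cbox 0 1" for x t
    using has_derivative_compose[OF bounded_linear_imp_has_derivative[OF bounded_linear_bdry_segment]
        Cinf_has_derivative[OF \<psi> bdry_segment_in_ball[OF p, of x r t]]] that
    by (auto simp: F intro!: has_derivative_mult_right)
  have cont: "continuous_on (?B \<times> cbox 0 1) (\<lambda>(x, t). F x t)"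
  proof (rule continuous_on_blinfun_componentwise)
    fix b :: "real^'n"
    show "continuous_on (?B \<times> cbox 0 1) (\<lambda>z. blinfun_apply (case z of (x, t) \<Rightarrow> F x t) b)"
      unfolding cbox_interval
      by (rule continuous_on_eq[OF continuous_on_bdry_average_derivative_integrand[OF \<psi> p, of k b]])
        (auto simp: F)
  qed
  have "((\<lambda>x. integral (cbox 0 1) (\<lambda>t. t ^ k * \<psi> (bdry_segment i0 x t))) has_derivative
      integral (cbox 0 1) (F x0)) (at x0 within ?B)"
    by (rule leibniz_rule[OF deriv _ cont x0 convex_ball])
      (auto simp: cbox_interval intro: integrable_bdry_average[OF Cinf_continuous_on[OF \<psi>] p])
  then have L: "(bdry_average i0 k \<psi> has_derivative integral (cbox 0 1) (F x0)) (at x0)"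
    by (simp add: bdry_average_def[abs_def] at_within_open[OF x0 open_ball])
  have "continuous_on (cbox 0 1) (\<lambda>t. (\<lambda>(x, t). F x t) (x0, t))"
    by (rule continuous_on_compose2[OF cont]) (auto intro!: continuous_intros x0)
  then have "F x0 integrable_on cbox 0 1" by (intro integrable_continuous) simp
  then have "blinfun_apply (integral (cbox 0 1) (F x0)) v = integral {0..1} (\<lambda>t. F x0 t v)" for v
    by (simp add: blinfun_apply_integral cbox_interval)
  also have "\<dots> v = integral {0..1} (\<lambda>t. t ^ k * ?D (bdry_segment i0 x0 t) (bdry_segment i0 v t))" for v
    by (rule integral_cong) (simp add: F[OF x0])
  finally have "blinfun_apply (integral (cbox 0 1) (F x0))
      = (\<lambda>v. integral {0..1} (\<lambda>t. t ^ k * ?D (bdry_segment i0 x0 t) (bdry_segment i0 v t)))" ..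
  with L show ?thesis by simp
qed

text \<open>By the chain rule, differentiating along the segment in the direction of the normal
  coordinate produces a factor t, which raises the weight of the average.\<close>

lemma has_derivative_bdry_average_explicit:
  fixes \<psi> :: "real^'n::finite \<Rightarrow> real"
  assumes \<psi>: "Cinf (ball p r) \<psi>" and p: "p $ i0 = 0" and x: "x \<in> ball p r"
  defines "D \<equiv> \<lambda>v z. frechet_derivative \<psi> (at z) v"
  shows "(bdry_average i0 k \<psi> has_derivative (\<lambda>v. bdry_average i0 k (D v) x
      - v $ i0 * bdry_average i0 k (D (axis i0 1)) x + v $ i0 * bdry_average i0 (Suc k) (D (axis i0 1)) x))
    (at x)"
proof -
  let ?e = "axis i0 1 :: real^'n"
  have int: "(\<lambda>t. t ^ m * D v (bdry_segment i0 x t)) integrable_on {0..1}" for m v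
    unfolding D_def
    by (rule integrable_bdry_average[OF Cinf_continuous_on[OF Cinf_frechet_derivative[OF \<psi> open_ball]] p x])
  have "integral {0..1} (\<lambda>t. t ^ k * D (bdry_segment i0 v t) (bdry_segment i0 x t))
    = integral {0..1} (\<lambda>t. t ^ k * D v (bdry_segment i0 x t) - v $ i0 * (t ^ k * D ?e (bdry_segment i0 x t))
        + v $ i0 * (t ^ Suc k * D ?e (bdry_segment i0 x t)))" for v
  proof (rule integral_cong)
    fix t :: real assume "t \<in> {0..1}"
    then have "linear (frechet_derivative \<psi> (at (bdry_segment i0 x t)))"
      using Cinf_has_derivative[OF \<psi> bdry_segment_in_ball[OF p x]] has_derivative_linear by blast
    then show "t ^ k * D (bdry_segment i0 v t) (bdry_segment i0 x t)
      = t ^ k * D v (bdry_segment i0 x t) - v $ i0 * (t ^ k * D ?e (bdry_segment i0 x t))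
        + v $ i0 * (t ^ Suc k * D ?e (bdry_segment i0 x t))"
      unfolding D_def bdry_segment_def[of i0 v] by (simp only: linear_diff linear_scale) (simp add: algebra_simps)
  qed
  also have "\<dots> v = bdry_average i0 k (D v) x - v $ i0 * bdry_average i0 k (D ?e) x
      + v $ i0 * bdry_average i0 (Suc k) (D ?e) x" for v
    unfolding bdry_average_def
    by (subst integral_add integral_diff, (intro integrable_diff integrable_on_mult_right int)+)+
      simp
  finally show ?thesis
    using has_derivative_bdry_average[OF \<psi> p x, of k] unfolding D_def by simp
qed

inductive_set bdry_averages :: "'n::finite \<Rightarrow> real^'n \<Rightarrow> real \<Rightarrow> (real^'n \<Rightarrow> real) set"
  for i0 p r where
  average: "Cinf (ball p r) \<psi> \<Longrightarrow> bdry_average i0 k \<psi> \<in> bdry_averages i0 p r"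
| add: "f \<in> bdry_averages i0 p r \<Longrightarrow> g \<in> bdry_averages i0 p r \<Longrightarrow> (\<lambda>x. f x + g x) \<in> bdry_averages i0 p r"
| cmult: "f \<in> bdry_averages i0 p r \<Longrightarrow> (\<lambda>x. c * f x) \<in> bdry_averages i0 p r"

lemma bdry_averages_derivative:
  assumes p: "p $ i0 = 0" and "f \<in> bdry_averages i0 p r"
  shows "\<exists>f'. (\<forall>x\<in>ball p r. (f has_derivative f' x) (at x)) \<and> (\<forall>v. (\<lambda>x. f' x v) \<in> bdry_averages i0 p r)"
  using assms(2)
proof induction
  case (average \<psi> k)
  let ?D = "\<lambda>v z. frechet_derivative \<psi> (at z) v" and ?e = "axis i0 1"
  have avg: "bdry_average i0 m (?D v) \<in> bdry_averages i0 p r" for m v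
    by (intro bdry_averages.average Cinf_frechet_derivative average open_ball)
  have "(\<lambda>x. bdry_average i0 k (?D v) x - v $ i0 * bdry_average i0 k (?D ?e) x
      + v $ i0 * bdry_average i0 (Suc k) (?D ?e) x) \<in> bdry_averages i0 p r" for v
    using bdry_averages.add[OF bdry_averages.add[OF avg bdry_averages.cmult[OF avg, of "- v $ i0"]]
        bdry_averages.cmult[OF avg, of "v $ i0"]]
    by simp
  then show ?case
    using has_derivative_bdry_average_explicit[OF average p]
    by (intro exI[of _ "\<lambda>x v. bdry_average i0 k (?D v) x - v $ i0 * bdry_average i0 k (?D ?e) x
      + v $ i0 * bdry_average i0 (Suc k) (?D ?e) x"]) blast
next
  case (add f g)
  then obtain f' g' where "\<forall>x\<in>ball p r. (f has_derivative f' x) (at x)" "\<forall>v. (\<lambda>x. f' x v) \<in> bdry_averages i0 p r"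
    "\<forall>x\<in>ball p r. (g has_derivative g' x) (at x)" "\<forall>v. (\<lambda>x. g' x v) \<in> bdry_averages i0 p r"
    by blast
  then show ?case
    by (intro exI[of _ "\<lambda>x v. f' x v + g' x v"]) (auto intro: has_derivative_add bdry_averages.add)
next
  case (cmult f c)
  then obtain f' where "\<forall>x\<in>ball p r. (f has_derivative f' x) (at x)" "\<forall>v. (\<lambda>x. f' x v) \<in> bdry_averages i0 p r"
    by blast
  then show ?case
    by (intro exI[of _ "\<lambda>x v. c * f' x v"]) (auto intro: has_derivative_mult_right bdry_averages.cmult)
qed

lemma bdry_averages_Cinf:
  assumes "p $ i0 = 0" "f \<in> bdry_averages i0 p r"
  shows "Cinf (ball p r) f"
  using assms(2) by (rule Cinf_coinduct_set) (rule bdry_averages_derivative[OF assms(1)])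

lemma bdry_average_fundamental:
  assumes g: "Cinf (ball p r) g" and p: "p $ i0 = 0" and x: "x \<in> ball p r"
  shows "g x = g (bdry_segment i0 x 0) + x $ i0 * bdry_average i0 0 (pd i0 g) x"
proof -
  have "((\<lambda>t. g (bdry_segment i0 x t)) has_vector_derivative x $ i0 * pd i0 g (bdry_segment i0 x t))
      (at t within {0..1})" if "t \<in> {0..1}" for t
  proof -
    let ?y = "bdry_segment i0 x t"
    have "(bdry_segment i0 x has_vector_derivative x $ i0 *\<^sub>R axis i0 1) (at t within {0..1})"
      unfolding bdry_segment_def has_vector_derivative_def
      by (auto intro!: derivative_eq_intros simp: algebra_simps)
    moreover have g': "(g has_derivative frechet_derivative g (at ?y)) (at ?y)"
      using Cinf_has_derivative[OF g bdry_segment_in_ball[OF p x that]] .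
    ultimately have "((g \<circ> bdry_segment i0 x) has_vector_derivative
        frechet_derivative g (at ?y) (x $ i0 *\<^sub>R axis i0 1)) (at t within {0..1})"
      by (rule vector_derivative_diff_chain_within[OF _ has_derivative_subset]) simp
    moreover have "frechet_derivative g (at ?y) (x $ i0 *\<^sub>R axis i0 1) = x $ i0 * pd i0 g ?y"
      using linear_scale[OF has_derivative_linear[OF g']] by (simp add: pd_def)
    ultimately show ?thesis by (simp add: o_def)
  qed
  then have "((\<lambda>t. x $ i0 * pd i0 g (bdry_segment i0 x t)) has_integral
      g (bdry_segment i0 x 1) - g (bdry_segment i0 x 0)) {0..1}"
    by (intro fundamental_theorem_of_calculus) auto
  moreover have "((\<lambda>t. x $ i0 * pd i0 g (bdry_segment i0 x t)) has_integral
      x $ i0 * bdry_average i0 0 (pd i0 g) x) {0..1}"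
    unfolding bdry_average_def
    using integrable_bdry_average[OF Cinf_continuous_on[OF Cinf_pd[OF g open_ball]] p x, of 0]
    by (intro has_integral_mult_right) (simp add: integrable_integral)
  ultimately have "g (bdry_segment i0 x 1) - g (bdry_segment i0 x 0) = x $ i0 * bdry_average i0 0 (pd i0 g) x"
    by (rule has_integral_unique)
  then show ?thesis by (simp add: bdry_segment_def)
qed

lemma hadamard_bdry:
  assumes g: "Cinf (ball p r) g" and p: "p $ i0 = 0"
    and zero: "\<And>x. x \<in> ball p r \<Longrightarrow> x $ i0 = 0 \<Longrightarrow> g x = 0"
  shows "\<exists>h. Cinf (ball p r) h \<and> (\<forall>x\<in>ball p r. g x = x $ i0 * h x) \<and> h p = pd i0 g p"
proof (intro exI[of _ "bdry_average i0 0 (pd i0 g)"] conjI ballI)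
  show "Cinf (ball p r) (bdry_average i0 0 (pd i0 g))"
    by (rule bdry_averages_Cinf[OF p bdry_averages.average[OF Cinf_pd[OF g open_ball]]])
  fix x assume x: "x \<in> ball p r"
  have "g (bdry_segment i0 x 0) = 0"
    by (rule zero[OF bdry_segment_in_ball[OF p x, of 0]]) (auto simp: bdry_segment_def axis_def)
  then show "g x = x $ i0 * bdry_average i0 0 (pd i0 g) x"
    using bdry_average_fundamental[OF g p x] by simp
next
  have "bdry_segment i0 p t = p" for t using p by (simp add: bdry_segment_def)
  then show "bdry_average i0 0 (pd i0 g) p = pd i0 g p" by (simp add: bdry_average_def)
qed


section \<open>Curvature identities\<close>

text \<open>The connection \<open>\<nabla> + \<psi>\<close> has Christoffel symbols \<open>\<Gamma> + proj_shift \<psi>\<close>.\<close>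

definition proj_shift :: "('n \<Rightarrow> real) \<Rightarrow> 'n \<Rightarrow> 'n \<Rightarrow> 'n \<Rightarrow> real" where
  "proj_shift \<psi> i j k = kd k j * \<psi> i + kd k i * \<psi> j"

definition rank_one_curv :: "('n \<Rightarrow> real) \<Rightarrow> 'n \<Rightarrow> 'n \<Rightarrow> 'n \<Rightarrow> 'n \<Rightarrow> real" where
  "rank_one_curv \<psi> a b c d = kd c a * \<psi> b * \<psi> d - kd c b * \<psi> a * \<psi> d"

definition curv_cross :: "('n::finite \<Rightarrow> 'n \<Rightarrow> 'n \<Rightarrow> real) \<Rightarrow> ('n \<Rightarrow> 'n \<Rightarrow> 'n \<Rightarrow> real) \<Rightarrow> 'n \<Rightarrow> 'n \<Rightarrow> 'n \<Rightarrow> 'n \<Rightarrow> real"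
  where "curv_cross G K a b c d =
    (\<Sum>e\<in>UNIV. G a e c * K b d e + K a e c * G b d e - G b e c * K a d e - K b e c * G a d e)"

lemma shiftconn_eq_proj_shift:
  "shiftconn \<alpha> \<rho> \<Gamma> i j k x = \<Gamma> i j k x + proj_shift (\<lambda>m. pd m \<rho> x) i j k / (\<alpha> * \<rho> x)"
  by (simp add: shiftconn_def proj_shift_def)

lemma kd_sum_left [simp]: "(\<Sum>e\<in>UNIV. kd (c::'n::finite) e * f e) = (f c :: real)"
proof -
  have "(\<Sum>e\<in>UNIV. kd c e * f e) = (\<Sum>e\<in>UNIV. if c = e then f e else 0)"
    by (rule sum.cong) (auto simp: kd_def)
  then show ?thesis by simp
qed

lemma kd_sum_right [simp]: "(\<Sum>e\<in>UNIV. kd e (c::'n::finite) * f e) = (f c :: real)"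
  using kd_sum_left[of c f] by (simp add: kd_def eq_commute)

lemma proj_shift_contract:
  "proj_shift \<psi> b d c * \<psi> a - proj_shift \<psi> a d c * \<psi> b = - rank_one_curv \<psi> a b c d"
  by (simp add: proj_shift_def rank_one_curv_def algebra_simps)

lemma proj_shift_quadratic:
  fixes \<psi> :: "'n::finite \<Rightarrow> real"
  shows "(\<Sum>e\<in>UNIV. proj_shift \<psi> a e c * proj_shift \<psi> b d e - proj_shift \<psi> b e c * proj_shift \<psi> a d e)
    = rank_one_curv \<psi> a b c d"
proof -
  have "(\<Sum>e\<in>UNIV. proj_shift \<psi> a e c * proj_shift \<psi> b d e - proj_shift \<psi> b e c * proj_shift \<psi> a d e)
    = (\<Sum>e\<in>UNIV. kd c e * (kd e d * \<psi> a * \<psi> b + kd e b * \<psi> a * \<psi> d - kd e d * \<psi> b * \<psi> a - kd e a * \<psi> b * \<psi> d))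
      + (\<Sum>e\<in>UNIV. kd e d * (kd c a * \<psi> e * \<psi> b - kd c b * \<psi> e * \<psi> a))
      + (\<Sum>e\<in>UNIV. kd e b * (kd c a * \<psi> e * \<psi> d)) - (\<Sum>e\<in>UNIV. kd e a * (kd c b * \<psi> e * \<psi> d))"
    unfolding proj_shift_def sum.distrib[symmetric] sum_subtractf[symmetric]
    by (rule sum.cong) (simp_all add: algebra_simps)
  also have "\<dots> = rank_one_curv \<psi> a b c d"
    by (simp only: kd_sum_left kd_sum_right) (simp add: rank_one_curv_def kd_def algebra_simps)
  finally show ?thesis .
qed

lemma curv_cross_proj_shift:
  fixes \<psi> :: "'n::finite \<Rightarrow> real"
  shows "curv_cross G (proj_shift \<psi>) a b c d
    = (G a b c - G b a c) * \<psi> d + kd c a * (\<Sum>e\<in>UNIV. G b d e * \<psi> e) - kd c b * (\<Sum>e\<in>UNIV. G a d e * \<psi> e)"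
proof -
  have "curv_cross G (proj_shift \<psi>) a b c d
    = (\<Sum>e\<in>UNIV. kd e d * (G a e c * \<psi> b - G b e c * \<psi> a)) + (\<Sum>e\<in>UNIV. kd e b * (G a e c * \<psi> d))
      - (\<Sum>e\<in>UNIV. kd e a * (G b e c * \<psi> d)) + (\<Sum>e\<in>UNIV. kd c e * (\<psi> a * G b d e - \<psi> b * G a d e))
      + kd c a * (\<Sum>e\<in>UNIV. G b d e * \<psi> e) - kd c b * (\<Sum>e\<in>UNIV. G a d e * \<psi> e)"
    unfolding curv_cross_def proj_shift_def sum_distrib_left sum.distrib[symmetric] sum_subtractf[symmetric]
    by (rule sum.cong) (simp_all add: algebra_simps)
  also have "\<dots> = (G a b c - G b a c) * \<psi> d + kd c a * (\<Sum>e\<in>UNIV. G b d e * \<psi> e)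
      - kd c b * (\<Sum>e\<in>UNIV. G a d e * \<psi> e)"
    by (simp only: kd_sum_left kd_sum_right) (simp add: algebra_simps)
  finally show ?thesis .
qed

lemma Cinf_curv:
  assumes "open V" "\<And>i j k. Cinf V (\<Gamma> i j k)"
  shows "Cinf V (curv \<Gamma> a b c d)"
  unfolding curv_def[abs_def] using assms
  by (intro Cinf_add Cinf_diff Cinf_sum Cinf_mult Cinf_pd) auto

lemma curv_quotient:
  fixes \<Gamma> H :: "'n::finite \<Rightarrow> 'n \<Rightarrow> 'n \<Rightarrow> real^'n \<Rightarrow> real"
  assumes V: "open V" "x \<in> V" and g: "Cinf V g" and H: "\<And>i j k. Cinf V (H i j k)"
    and g_nz: "\<And>y. y \<in> V \<Longrightarrow> g y \<noteq> 0"
    and \<Gamma>: "\<And>i j k y. y \<in> V \<Longrightarrow> \<Gamma> i j k y = H i j k y / g y"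
  shows "(g x)\<^sup>2 * curv \<Gamma> a b c d x =
    g x * (pd a (H b d c) x - pd b (H a d c) x) - (H b d c x * pd a g x - H a d c x * pd b g x)
    + (\<Sum>e\<in>UNIV. H a e c x * H b d e x - H b e c x * H a d e x)"
proof -
  have gx: "g x \<noteq> 0" using g_nz V by blast
  have "pd m (\<Gamma> i j k) x = pd m (\<lambda>y. H i j k y / g y) x" for m i j k
    using \<Gamma> by (intro pd_cong_open[OF V])
  also have "\<dots> m i j k = (pd m (H i j k) x * g x - H i j k x * pd m g x) / (g x)\<^sup>2" for m i j k
    using Cinf_differentiable[OF H V(2)] Cinf_differentiable[OF g V(2)] gx by (rule pd_divide)
  finally have pd\<Gamma>: "pd m (\<Gamma> i j k) x = (pd m (H i j k) x * g x - H i j k x * pd m g x) / (g x)\<^sup>2"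
    for m i j k .
  have "(\<Sum>e\<in>UNIV. \<Gamma> a e c x * \<Gamma> b d e x - \<Gamma> b e c x * \<Gamma> a d e x)
      = (\<Sum>e\<in>UNIV. H a e c x * H b d e x - H b e c x * H a d e x) / (g x)\<^sup>2"
    unfolding sum_divide_distrib
    by (rule sum.cong) (use gx in \<open>simp_all add: \<Gamma>[OF V(2)] field_simps power2_eq_square\<close>)
  then show ?thesis
    unfolding curv_def pd\<Gamma> using gx by (simp add: field_simps power2_eq_square)
qed

lemma curv_minus_proj_shift_quotient:
  fixes \<Gamma> G :: "'n::finite \<Rightarrow> 'n \<Rightarrow> 'n \<Rightarrow> real^'n \<Rightarrow> real"
  assumes V: "open V" "x \<in> V" and g: "Cinf V g" and G: "\<And>i j k. Cinf V (G i j k)"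
    and g_nz: "\<And>y. y \<in> V \<Longrightarrow> g y \<noteq> 0"
    and \<Gamma>: "\<And>i j k y. y \<in> V \<Longrightarrow> \<Gamma> i j k y = G i j k y - proj_shift (\<lambda>m. pd m g y) i j k / g y"
  defines "K \<equiv> \<lambda>i j k y. proj_shift (\<lambda>m. pd m g y) i j k"
  shows "g x * curv \<Gamma> a b c d x = g x * curv G a b c d x
    - (pd a (K b d c) x - pd b (K a d c) x + curv_cross (\<lambda>i j k. G i j k x) (\<lambda>i j k. K i j k x) a b c d)"
proof -
  have K: "Cinf V (K i j k)" for i j k
    unfolding K_def proj_shift_def using V(1) g by (intro Cinf_add Cinf_mult Cinf_const Cinf_pd)
  have gx: "g x \<noteq> 0" using g_nz V by blast
  have "pd m (\<Gamma> i j k) x = pd m (\<lambda>y. G i j k y - K i j k y / g y) x" for m i j k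
    using \<Gamma> by (intro pd_cong_open[OF V]) (simp add: K_def)
  also have "\<dots> m i j k = pd m (G i j k) x - (pd m (K i j k) x * g x - K i j k x * pd m g x) / (g x)\<^sup>2"
    for m i j k
    using Cinf_differentiable[OF G V(2)] Cinf_differentiable[OF K V(2)] Cinf_differentiable[OF g V(2)] gx
      Cinf_differentiable[OF Cinf_divide[OF K g g_nz] V(2)]
    by (simp add: pd_diff pd_divide)
  finally have pd\<Gamma>: "pd m (\<Gamma> i j k) x
      = pd m (G i j k) x - (pd m (K i j k) x * g x - K i j k x * pd m g x) / (g x)\<^sup>2" for m i j k .
  have sum\<Gamma>: "(\<Sum>e\<in>UNIV. \<Gamma> a e c x * \<Gamma> b d e x - \<Gamma> b e c x * \<Gamma> a d e x)
      = (\<Sum>e\<in>UNIV. G a e c x * G b d e x - G b e c x * G a d e x)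
        - curv_cross (\<lambda>i j k. G i j k x) (\<lambda>i j k. K i j k x) a b c d / g x
        + (\<Sum>e\<in>UNIV. K a e c x * K b d e x - K b e c x * K a d e x) / (g x)\<^sup>2"
    unfolding curv_cross_def sum_divide_distrib sum_subtractf[symmetric] sum.distrib[symmetric]
    by (rule sum.cong) (use gx in \<open>simp_all add: \<Gamma>[OF V(2)] K_def field_simps power2_eq_square\<close>)
  have "(\<Sum>e\<in>UNIV. K a e c x * K b d e x - K b e c x * K a d e x)
      = rank_one_curv (\<lambda>m. pd m g x) a b c d"
    unfolding K_def by (rule proj_shift_quadratic)
  also have "\<dots> = - (K b d c x * pd a g x - K a d c x * pd b g x)"
    unfolding K_def using proj_shift_contract[of "\<lambda>m. pd m g x" b d c a] by simp
  finally have quad: "(\<Sum>e\<in>UNIV. K a e c x * K b d e x - K b e c x * K a d e x)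
      = - (K b d c x * pd a g x - K a d c x * pd b g x)" .
  show ?thesis
    unfolding curv_def pd\<Gamma> sum\<Gamma> quad using gx by (simp add: field_simps power2_eq_square)
qed

lemma Cinf_proj_shift:
  assumes "\<And>m. Cinf V (\<psi> m)"
  shows "Cinf V (\<lambda>x. proj_shift (\<lambda>m. \<psi> m x) i j k)"
  unfolding proj_shift_def using assms by (intro Cinf_add Cinf_cmult)

lemma pd_proj_shift:
  fixes \<psi> :: "'n::finite \<Rightarrow> real^'n \<Rightarrow> real"
  assumes "\<And>m. \<psi> m differentiable at x"
  shows "pd a (\<lambda>y. proj_shift (\<lambda>m. \<psi> m y) i j k) x = proj_shift (\<lambda>m. pd a (\<psi> m) x) i j k"
  unfolding proj_shift_def using assms by (simp add: pd_add pd_cmult derivative_intros)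

lemma Cinf_curv_cross:
  assumes "\<And>i j k. Cinf V (G i j k)" "\<And>i j k. Cinf V (K i j k)"
  shows "Cinf V (\<lambda>x. curv_cross (\<lambda>i j k. G i j k x) (\<lambda>i j k. K i j k x) a b c d)"
  unfolding curv_cross_def using assms by (intro Cinf_sum Cinf_add Cinf_diff Cinf_mult)


section \<open>Local normal form near a boundary point\<close>

lemma openin_halfsp_ball:
  assumes "openin (top_of_set (halfsp i0)) U" "p \<in> U"
  obtains e where "e > 0" "\<And>x. x \<in> ball p e \<Longrightarrow> 0 \<le> x $ i0 \<Longrightarrow> x \<in> U"
proof -
  obtain T where T: "open T" "U = halfsp i0 \<inter> T" using assms(1) by (auto simp: openin_open)
  obtain e where "e > 0" "ball p e \<subseteq> T" using T assms(2) open_contains_ball by blast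
  then show thesis using T by (intro that[of e]) (auto simp: halfsp_def)
qed

lemma open_diff_bdry:
  fixes U :: "(real^'n::finite) set"
  assumes "openin (top_of_set (halfsp i0)) U"
  shows "open (U - bdry i0)"
proof -
  obtain T where T: "open T" "U = halfsp i0 \<inter> T" using assms by (auto simp: openin_open)
  have "U - bdry i0 = T \<inter> {x. 0 < x $ i0}" using T by (auto simp: halfsp_def bdry_def)
  moreover have "open {x. 0 < (x::real^'n) $ i0}"
    by (rule open_Collect_less) (intro continuous_intros)+
  ultimately show ?thesis using T(1) by auto
qed

text \<open>On the hyperplane \<open>d(x\<^sub>i\<^sub>0 h) = h dx\<^sub>i\<^sub>0\<close>, so a defining function with nonvanishing
  differential has a nonvanishing factor.\<close>

lemma factor_nonzero_at_bdry:
  fixes g h g' :: "real^'n::finite \<Rightarrow> real"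
  assumes g: "Cinf (ball p r) g" and h: "Cinf (ball p r) h" and "0 < r" and p: "p $ i0 = 0"
    and factor: "\<And>x. x \<in> ball p r \<Longrightarrow> g x = x $ i0 * h x"
    and g': "open W" "p \<in> W" "Cinf W g'" "pd i g' p \<noteq> 0"
    and eq: "\<And>x. x \<in> half_ball i0 p r \<Longrightarrow> x \<in> W \<Longrightarrow> g' x = g x"
  shows "h p \<noteq> 0"
proof
  assume "h p = 0"
  obtain e where e: "e > 0" "ball p e \<subseteq> W" using g'(1,2) open_contains_ball by blast
  have "pd i g' p = pd i g p"
    by (rule pd_eq_on_half_ball[OF g'(3,1,2) g open_ball _ p, of "min r e"])
      (use \<open>0 < r\<close> e eq in \<open>auto simp: half_ball_def\<close>)
  also have "\<dots> = pd i (\<lambda>y. y $ i0 * h y) p"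
    using \<open>0 < r\<close> factor by (intro pd_cong_open[OF open_ball]) auto
  also have "\<dots> = 0"
    using pd_coord_mult[OF Cinf_differentiable[OF h], of p i i0] \<open>0 < r\<close> p \<open>h p = 0\<close> by simp
  finally show False using g'(4) by simp
qed

lemma ldf_local_factor:
  assumes rho: "ldf i0 U \<rho>" and p: "p \<in> U \<inter> bdry i0"
  obtains r g h where "0 < r" "Cinf (ball p r) g" "Cinf (ball p r) h"
    "\<And>x. x \<in> ball p r \<Longrightarrow> g x = x $ i0 * h x \<and> h x \<noteq> 0"
    "\<And>x. x \<in> ball p r \<Longrightarrow> 0 \<le> x $ i0 \<Longrightarrow> x \<in> U \<and> g x = \<rho> x"
proof -
  have p0: "p $ i0 = 0" using p by (simp add: bdry_def)
  obtain W g where W: "open W" "p \<in> W" "Cinf W g" "\<forall>x\<in>U \<inter> W. g x = \<rho> x"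
    using rho p unfolding ldf_def smooth_upto_def by blast
  obtain e1 where e1: "e1 > 0" "\<And>x. x \<in> ball p e1 \<Longrightarrow> 0 \<le> x $ i0 \<Longrightarrow> x \<in> U"
    using rho p openin_halfsp_ball unfolding ldf_def by blast
  obtain e2 where e2: "e2 > 0" "ball p e2 \<subseteq> W" using W(1,2) open_contains_ball by blast
  define r0 where "r0 = min e1 e2"
  have r0: "0 < r0" using e1 e2 by (simp add: r0_def)
  have ext: "x \<in> U \<and> g x = \<rho> x" if "x \<in> ball p r0" "0 \<le> x $ i0" for x
    using that e1 e2 W(4) by (auto simp: r0_def)
  have g: "Cinf (ball p r0) g"
    by (rule Cinf_subset[OF W(3)]) (use e2 in \<open>auto simp: r0_def\<close>)
  obtain h where h: "Cinf (ball p r0) h" "\<forall>x\<in>ball p r0. g x = x $ i0 * h x"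
  proof -
    have "g x = 0" if "x \<in> ball p r0" "x $ i0 = 0" for x
      using ext[of x] that rho by (auto simp: ldf_def bdry_def)
    then show thesis using hadamard_bdry[OF g p0] that by blast
  qed
  have "h p \<noteq> 0"
  proof -
    obtain W' g' i where W': "open W'" "p \<in> W'" "Cinf W' g'" "\<forall>x\<in>U \<inter> W'. g' x = \<rho> x" "pd i g' p \<noteq> 0"
      using rho p unfolding ldf_def by blast
    show ?thesis
    proof (rule factor_nonzero_at_bdry[OF g h(1) r0 p0 _ W'(1,2,3,5)])
      fix x assume "x \<in> half_ball i0 p r0" "x \<in> W'"
      then show "g' x = g x" using ext W'(4) by (auto simp: half_ball_def)
    qed (use h(2) in blast)
  qed
  then obtain d where d: "d > 0" "\<forall>y. dist p y < d \<longrightarrow> h y \<noteq> 0"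
    using continuous_at_avoid[OF Cinf_isCont[OF h(1)]] r0 by (metis centre_in_ball)
  show thesis
  proof (rule that[of "min r0 d" g h])
    show "Cinf (ball p (min r0 d)) g" "Cinf (ball p (min r0 d)) h"
      using g h(1) by (auto elim: Cinf_subset)
  qed (use r0 d h(2) ext in auto)
qed

lemma shiftconn_mult:
  assumes V: "open V" "x \<in> V" and u: "Cinf V u" and s: "Cinf V s"
    and \<rho>: "\<And>y. y \<in> V \<Longrightarrow> \<rho> y = u y * s y" and \<sigma>: "\<And>y. y \<in> V \<Longrightarrow> \<sigma> y = s y"
    and nz: "u x \<noteq> 0" "s x \<noteq> 0" "\<alpha> \<noteq> 0"
  shows "shiftconn \<alpha> \<rho> \<Gamma> i j k x = shiftconn \<alpha> \<sigma> \<Gamma> i j k x + proj_shift (\<lambda>m. pd m u x / u x) i j k / \<alpha>"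
proof -
  have "pd m \<rho> x = pd m (\<lambda>y. u y * s y) x" for m
    using \<rho> by (intro pd_cong_open[OF V])
  also have "\<dots> m = u x * pd m s x + pd m u x * s x" for m
    by (intro pd_mult Cinf_differentiable[OF u V(2)] Cinf_differentiable[OF s V(2)])
  finally have "pd m \<rho> x = u x * pd m s x + pd m u x * s x" for m .
  moreover have "pd m \<sigma> x = pd m s x" for m
    using \<sigma> by (intro pd_cong_open[OF V])
  ultimately show ?thesis
    using nz \<rho>[OF V(2)] \<sigma>[OF V(2)] by (simp add: shiftconn_def proj_shift_def field_simps)
qed

lemma proj_compact_smooth_symbols:
  assumes pc: "proj_compact i0 D \<alpha> \<Gamma>" and p: "p \<in> D \<inter> bdry i0"
  obtains W \<sigma> e F where "p \<in> W" "ldf i0 W \<sigma>" "0 < e" "\<And>i j k. Cinf (ball p e) (F i j k)"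
    "\<And>i j k x. x \<in> ball p e \<Longrightarrow> x \<in> W - bdry i0 \<Longrightarrow> F i j k x = shiftconn \<alpha> \<sigma> \<Gamma> i j k x"
proof -
  from pc p obtain W \<sigma> where W: "p \<in> W" "ldf i0 W \<sigma>"
    and "\<forall>i j k. \<exists>F. smooth_upto W F \<and> (\<forall>x\<in>W - bdry i0. F x = shiftconn \<alpha> \<sigma> \<Gamma> i j k x)"
    unfolding proj_compact_def by (elim bspec[elim_format] exE conjE)
  then obtain F where F: "\<And>i j k. smooth_upto W (F i j k)"
    "\<And>i j k x. x \<in> W - bdry i0 \<Longrightarrow> F i j k x = shiftconn \<alpha> \<sigma> \<Gamma> i j k x"
    by metis
  have "\<forall>i j k. \<exists>W' F'. open W' \<and> p \<in> W' \<and> Cinf W' F' \<and> (\<forall>x\<in>W \<inter> W'. F' x = F i j k x)"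
    using F(1) W(1) unfolding smooth_upto_def by blast
  then obtain W' F' where W': "\<And>i j k. open (W' i j k)" "\<And>i j k. p \<in> W' i j k"
    "\<And>i j k. Cinf (W' i j k) (F' i j k)" "\<And>i j k x. x \<in> W \<inter> W' i j k \<Longrightarrow> F' i j k x = F i j k x"
    by metis
  have "open (\<Inter>i. \<Inter>j. \<Inter>k. W' i j k)" "p \<in> (\<Inter>i. \<Inter>j. \<Inter>k. W' i j k)"
    using W'(1,2) by (simp_all add: open_INT)
  then obtain e where e: "0 < e" "ball p e \<subseteq> (\<Inter>i. \<Inter>j. \<Inter>k. W' i j k)"
    by (rule openE)
  have e': "ball p e \<subseteq> W' i j k" for i j k
    using e(2) by (auto simp: subset_iff)
  show thesis
  proof (rule that[OF W e(1) Cinf_subset[OF W'(3) e']])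
    fix i j k x assume x: "x \<in> ball p e" "x \<in> W - bdry i0"
    then have "x \<in> W \<inter> W' i j k" using e'[of i j k] by blast
    then have "F' i j k x = F i j k x" by (rule W'(4))
    also have "\<dots> = shiftconn \<alpha> \<sigma> \<Gamma> i j k x" using F(2) x(2) .
    finally show "F' i j k x = shiftconn \<alpha> \<sigma> \<Gamma> i j k x" .
  qed
qed

lemma ldf_quotient:
  assumes \<rho>: "ldf i0 U \<rho>" "p \<in> U \<inter> bdry i0" and \<sigma>: "ldf i0 W \<sigma>" "p \<in> W"
  obtains r g s u where "0 < r" "Cinf (ball p r) g" "Cinf (ball p r) s" "Cinf (ball p r) u"
    "\<And>x. x \<in> ball p r \<Longrightarrow> g x = u x * s x \<and> u x \<noteq> 0"
    "\<And>x. x \<in> ball p r \<Longrightarrow> 0 \<le> x $ i0 \<Longrightarrow> x \<in> U \<and> g x = \<rho> x \<and> x \<in> W \<and> s x = \<sigma> x"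
    "\<And>x. x \<in> half_ball i0 p r \<Longrightarrow> s x \<noteq> 0"
proof -
  obtain r1 g hg where g: "0 < r1" "Cinf (ball p r1) g" "Cinf (ball p r1) hg"
    "\<And>x. x \<in> ball p r1 \<Longrightarrow> g x = x $ i0 * hg x \<and> hg x \<noteq> 0"
    "\<And>x. x \<in> ball p r1 \<Longrightarrow> 0 \<le> x $ i0 \<Longrightarrow> x \<in> U \<and> g x = \<rho> x"
    by (rule ldf_local_factor[OF \<rho>]) blast
  obtain r2 s hs where s: "0 < r2" "Cinf (ball p r2) s" "Cinf (ball p r2) hs"
    "\<And>x. x \<in> ball p r2 \<Longrightarrow> s x = x $ i0 * hs x \<and> hs x \<noteq> 0"
    "\<And>x. x \<in> ball p r2 \<Longrightarrow> 0 \<le> x $ i0 \<Longrightarrow> x \<in> W \<and> s x = \<sigma> x"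
    by (rule ldf_local_factor[OF \<sigma>(1), of p]) (use \<sigma>(2) \<rho>(2) in blast)+
  define r where "r = min r1 r2"
  have B: "ball p r \<subseteq> ball p r1" "ball p r \<subseteq> ball p r2" by (auto simp: r_def)
  show thesis
  proof (rule that[of r g s "\<lambda>x. hg x / hs x"])
    show "0 < r" using g(1) s(1) by (simp add: r_def)
    show "Cinf (ball p r) g" "Cinf (ball p r) s"
      using Cinf_subset[OF g(2) B(1)] Cinf_subset[OF s(2) B(2)] .
    show "Cinf (ball p r) (\<lambda>x. hg x / hs x)"
      using Cinf_subset[OF g(3) B(1)] Cinf_subset[OF s(3) B(2)] s(4) B(2)
      by (intro Cinf_divide) auto
    show "g x = hg x / hs x * s x \<and> hg x / hs x \<noteq> 0" if "x \<in> ball p r" for x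
    proof -
      have "x \<in> ball p r1" "x \<in> ball p r2" using that B by auto
      then show ?thesis using g(4)[of x] s(4)[of x] by auto
    qed
    show "x \<in> U \<and> g x = \<rho> x \<and> x \<in> W \<and> s x = \<sigma> x" if "x \<in> ball p r" "0 \<le> x $ i0" for x
      using g(5)[of x] s(5)[of x] that B by auto
    show "s x \<noteq> 0" if "x \<in> half_ball i0 p r" for x
      using s(4)[of x] that B by (auto simp: half_ball_def)
  qed
qed

text \<open>g and G extend the defining function \<open>\<rho>\<close> and the Christoffel symbols of
  \<open>\<nabla> + d\<rho>/(\<alpha>\<rho>)\<close> smoothly across the boundary near p.\<close>

locale bdry_normal_form =
  fixes i0 :: "'n::finite" and U :: "(real^'n) set" and \<rho> :: "real^'n \<Rightarrow> real" and \<alpha> :: real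
    and \<Gamma> G :: "'n \<Rightarrow> 'n \<Rightarrow> 'n \<Rightarrow> real^'n \<Rightarrow> real" and p :: "real^'n" and r :: real
    and g :: "real^'n \<Rightarrow> real"
  assumes rho: "ldf i0 U \<rho>" and p: "p \<in> U \<inter> bdry i0" and \<alpha>: "0 < \<alpha>" and r: "0 < r"
    and g: "Cinf (ball p r) g" and G: "\<And>i j k. Cinf (ball p r) (G i j k)"
    and g_rho: "\<And>x. x \<in> ball p r \<Longrightarrow> 0 \<le> x $ i0 \<Longrightarrow> x \<in> U \<and> g x = \<rho> x"
    and g_nonzero: "\<And>x. x \<in> half_ball i0 p r \<Longrightarrow> g x \<noteq> 0"
    and G_shiftconn: "\<And>i j k x. x \<in> half_ball i0 p r \<Longrightarrow> G i j k x = shiftconn \<alpha> \<rho> \<Gamma> i j k x"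

lemma proj_compact_bdry_normal_form:
  assumes \<alpha>: "0 < \<alpha>" and pc: "proj_compact i0 D \<alpha> \<Gamma>" and UD: "U \<subseteq> D"
    and rho: "ldf i0 U \<rho>" and p: "p \<in> U \<inter> bdry i0"
  shows "\<exists>G r g. bdry_normal_form i0 U \<rho> \<alpha> \<Gamma> G p r g"
proof -
  obtain W \<sigma> e F where W: "p \<in> W" "ldf i0 W \<sigma>" and e: "0 < e" and F: "\<And>i j k. Cinf (ball p e) (F i j k)"
    and F\<sigma>: "\<And>i j k x. x \<in> ball p e \<Longrightarrow> x \<in> W - bdry i0 \<Longrightarrow> F i j k x = shiftconn \<alpha> \<sigma> \<Gamma> i j k x"
    by (rule proj_compact_smooth_symbols[OF pc, of p]) (use p UD in blast)+
  obtain r' g s u where r': "0 < r'" and gsu: "Cinf (ball p r') g" "Cinf (ball p r') s" "Cinf (ball p r') u"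
    and factor: "\<And>x. x \<in> ball p r' \<Longrightarrow> g x = u x * s x \<and> u x \<noteq> 0"
    and ext: "\<And>x. x \<in> ball p r' \<Longrightarrow> 0 \<le> x $ i0 \<Longrightarrow> x \<in> U \<and> g x = \<rho> x \<and> x \<in> W \<and> s x = \<sigma> x"
    and s_nonzero: "\<And>x. x \<in> half_ball i0 p r' \<Longrightarrow> s x \<noteq> 0"
    by (rule ldf_quotient[OF rho p W(2,1)]) blast
  define r where "r = min e r'"
  have B: "ball p r \<subseteq> ball p e" "ball p r \<subseteq> ball p r'" "half_ball i0 p r \<subseteq> half_ball i0 p r'"
    by (auto simp: r_def half_ball_def)
  have u: "Cinf (ball p r) u" "\<And>x. x \<in> ball p r \<Longrightarrow> u x \<noteq> 0"
    using Cinf_subset[OF gsu(3) B(2)] factor B(2) by auto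
  \<comment> \<open>\<open>d\<rho>/\<rho> = du/u + d\<sigma>/\<sigma>\<close> in the interior\<close>
  define G where "G i j k x = F i j k x + proj_shift (\<lambda>m. pd m u x / u x) i j k / \<alpha>" for i j k x
  have "bdry_normal_form i0 U \<rho> \<alpha> \<Gamma> G p r g"
  proof
    show "0 < r" using e r' by (simp add: r_def)
    show "Cinf (ball p r) g" using Cinf_subset[OF gsu(1) B(2)] .
    show "Cinf (ball p r) (G i j k)" for i j k
      unfolding G_def using Cinf_subset[OF F B(1)] u \<alpha>
      by (intro Cinf_add Cinf_divide Cinf_const Cinf_proj_shift Cinf_pd open_ball) auto
    show "x \<in> U \<and> g x = \<rho> x" if "x \<in> ball p r" "0 \<le> x $ i0" for x
      using ext that B(2) by blast
    show "g x \<noteq> 0" if "x \<in> half_ball i0 p r" for x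
      using factor[of x] s_nonzero[of x] that B by (auto simp: half_ball_def)
    show "G i j k x = shiftconn \<alpha> \<rho> \<Gamma> i j k x" if x: "x \<in> half_ball i0 p r" for i j k x
    proof -
      have V: "y \<in> ball p r \<and> y \<in> ball p r' \<and> 0 < y $ i0" if "y \<in> half_ball i0 p r" for y
        using that B(2) by (auto simp: half_ball_def)
      have "shiftconn \<alpha> \<rho> \<Gamma> i j k x = shiftconn \<alpha> \<sigma> \<Gamma> i j k x + proj_shift (\<lambda>m. pd m u x / u x) i j k / \<alpha>"
      proof (rule shiftconn_mult[OF open_half_ball x Cinf_subset[OF u(1)] Cinf_subset[OF gsu(2)]])
        fix y assume "y \<in> half_ball i0 p r"
        then have y: "y \<in> ball p r'" "0 \<le> y $ i0" using V[of y] by auto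
        show "\<rho> y = u y * s y" "\<sigma> y = s y" using factor[OF y(1)] ext[OF y] by auto
      qed (use x V u(2) s_nonzero[OF subsetD[OF B(3) x]] \<alpha> in auto)
      moreover have "F i j k x = shiftconn \<alpha> \<sigma> \<Gamma> i j k x"
        using V[OF x] ext[of x] B(1) by (intro F\<sigma>) (auto simp: bdry_def)
      ultimately show ?thesis by (simp add: G_def)
    qed
  qed (use rho p \<alpha> in auto)
  then show ?thesis by blast
qed

context bdry_normal_form
begin

lemma p0: "p $ i0 = 0" and g_at_p: "g p = 0" and centre: "p \<in> ball p r"
  using p g_rho[of p] r rho by (auto simp: bdry_def ldf_def)

lemma rho_eq_g: "y \<in> half_ball i0 p r \<Longrightarrow> \<rho> y = g y"
  using g_rho by (auto simp: half_ball_def)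

lemma Gamma_eq:
  assumes x: "x \<in> half_ball i0 p r"
  shows "\<Gamma> i j k x = G i j k x - proj_shift (\<lambda>m. pd m g x) i j k / (\<alpha> * g x)"
proof -
  have "pd m \<rho> x = pd m g x" for m
    using rho_eq_g by (intro pd_cong_open[OF open_half_ball x])
  then show ?thesis using G_shiftconn[OF x] rho_eq_g[OF x] by (simp add: shiftconn_eq_proj_shift)
qed

lemma Cinf_half_ball: "Cinf (ball p r) f \<Longrightarrow> Cinf (half_ball i0 p r) f"
  by (erule Cinf_subset) (rule half_ball_subset_ball)

lemma pd_at_p_unique:
  assumes W: "open W" "p \<in> W" "Cinf W g'" "\<forall>x\<in>U \<inter> W. g' x = \<rho> x"
  shows "pd i g' p = pd i g p" "pd i (pd j g') p = pd i (pd j g) p"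
proof -
  obtain e where e: "0 < e" "ball p e \<subseteq> W" using W(1,2) by (rule openE)
  have eq: "g' x = g x" if "x \<in> half_ball i0 p (min r e)" for x
    using that e W(4) g_rho by (auto simp: half_ball_def)
  have e': "0 < min r e" using r e by simp
  show "pd i g' p = pd i g p"
    by (rule pd_eq_on_half_ball[OF W(3,1,2) g open_ball centre p0 e' eq])
  show "pd i (pd j g') p = pd i (pd j g) p"
  proof (rule pd_eq_on_half_ball[OF Cinf_pd[OF W(3,1)] W(1,2) Cinf_pd[OF g open_ball] open_ball centre p0 e'])
    fix x assume "x \<in> half_ball i0 p (min r e)"
    then show "pd j g' x = pd j g x" using eq by (intro pd_cong_open[OF open_half_ball])
  qed
qed

lemma symbols_at_p_unique:
  assumes W: "open W" "p \<in> W" "Cinf W (Gh i j k)"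
    and Gh: "\<forall>x\<in>U \<inter> W - bdry i0. Gh i j k x = shiftconn \<alpha> \<rho> \<Gamma> i j k x"
  shows "Gh i j k p = G i j k p"
proof -
  obtain e where e: "0 < e" "ball p e \<subseteq> W" using W(1,2) by (rule openE)
  show ?thesis
  proof (rule Cinf_eq_on_half_ball[OF W(3,2) G centre p0])
    show "0 < min r e" using r e by simp
    fix x assume "x \<in> half_ball i0 p (min r e)"
    then have "x \<in> half_ball i0 p r" "x \<in> U \<inter> W - bdry i0"
      using e g_rho by (auto simp: half_ball_def bdry_def)
    then show "Gh i j k x = G i j k x" using Gh G_shiftconn by auto
  qed
qed

lemma sq_rho_curv_local:
  "\<exists>f. Cinf (ball p r) f \<and> (\<forall>y\<in>half_ball i0 p r. f y = (\<rho> y)\<^sup>2 * curv \<Gamma> a b c d y)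
     \<and> f p = (1 - \<alpha>) / \<alpha>\<^sup>2 * rank_one_curv (\<lambda>m. pd m g p) a b c d"
proof -
  define H where "H i j k y = g y * G i j k y - proj_shift (\<lambda>m. pd m g y) i j k / \<alpha>" for i j k y
  have H: "Cinf (ball p r) (H i j k)" for i j k
    unfolding H_def using \<alpha> g G
    by (intro Cinf_diff Cinf_mult Cinf_divide Cinf_proj_shift Cinf_pd Cinf_const open_ball) auto
  define f where "f y = g y * (pd a (H b d c) y - pd b (H a d c) y) - (H b d c y * pd a g y - H a d c y * pd b g y)
    + (\<Sum>e\<in>UNIV. H a e c y * H b d e y - H b e c y * H a d e y)" for y
  have f: "Cinf (ball p r) f"
    unfolding f_def using g H by (intro Cinf_add Cinf_diff Cinf_mult Cinf_sum Cinf_pd open_ball)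
  have f\<Gamma>: "f y = (\<rho> y)\<^sup>2 * curv \<Gamma> a b c d y" if y: "y \<in> half_ball i0 p r" for y
  proof -
    have \<Gamma>: "\<Gamma> i j k z = H i j k z / g z" if z: "z \<in> half_ball i0 p r" for i j k z
      using Gamma_eq[OF z] g_nonzero[OF z] \<alpha> by (simp add: H_def field_simps)
    have "(g y)\<^sup>2 * curv \<Gamma> a b c d y = f y"
      unfolding f_def
      by (rule curv_quotient[OF open_half_ball y Cinf_half_ball[OF g] Cinf_half_ball[OF H] g_nonzero \<Gamma>])
    then show ?thesis by (simp add: rho_eq_g[OF y])
  qed
  let ?\<psi> = "\<lambda>m. pd m g p"
  have "f p = (proj_shift ?\<psi> b d c * ?\<psi> a - proj_shift ?\<psi> a d c * ?\<psi> b) / \<alpha>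
    + (\<Sum>e\<in>UNIV. proj_shift ?\<psi> a e c * proj_shift ?\<psi> b d e - proj_shift ?\<psi> b e c * proj_shift ?\<psi> a d e) / \<alpha>\<^sup>2"
    unfolding f_def H_def g_at_p sum_divide_distrib
    by (simp add: power2_eq_square diff_divide_distrib algebra_simps)
  also have "\<dots> = (1 - \<alpha>) / \<alpha>\<^sup>2 * rank_one_curv ?\<psi> a b c d"
    unfolding proj_shift_quadratic proj_shift_contract[of ?\<psi> b d c a] using \<alpha>
    by (simp add: field_simps power2_eq_square)
  finally have fp: "f p = (1 - \<alpha>) / \<alpha>\<^sup>2 * rank_one_curv ?\<psi> a b c d" .
  show ?thesis by (intro exI[of _ f] conjI ballI f f\<Gamma> fp)
qed

lemma G_symmetric_at_p:
  assumes torsion_free: "\<forall>i j k. \<forall>x\<in>D - bdry i0. \<Gamma> i j k x = \<Gamma> j i k x" and UD: "U \<subseteq> D"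
  shows "G i j k p = G j i k p"
proof (rule Cinf_eq_on_half_ball[OF G centre G centre p0 r])
  fix x assume x: "x \<in> half_ball i0 p r"
  then have "x \<in> D - bdry i0" using g_rho UD by (auto simp: half_ball_def bdry_def)
  then show "G i j k x = G j i k x"
    using torsion_free by (simp add: G_shiftconn[OF x] shiftconn_def add.commute)
qed

lemma rho_curv_local:
  assumes \<alpha>1: "\<alpha> = 1" and torsion_free: "\<forall>i j k. \<forall>x\<in>D - bdry i0. \<Gamma> i j k x = \<Gamma> j i k x"
    and UD: "U \<subseteq> D"
  shows "\<exists>f. Cinf (ball p r) f \<and> (\<forall>y\<in>half_ball i0 p r. f y = \<rho> y * curv \<Gamma> a b c d y)
    \<and> f p = kd c a * (pd b (pd d g) p - (\<Sum>e\<in>UNIV. G b d e p * pd e g p))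
      - kd c b * (pd a (pd d g) p - (\<Sum>e\<in>UNIV. G a d e p * pd e g p))"
proof -
  define K where "K i j k y = proj_shift (\<lambda>m. pd m g y) i j k" for i j k y
  have K: "Cinf (ball p r) (K i j k)" for i j k
    unfolding K_def using g by (intro Cinf_proj_shift Cinf_pd open_ball)
  define f where "f y = g y * curv G a b c d y
    - (pd a (K b d c) y - pd b (K a d c) y + curv_cross (\<lambda>i j k. G i j k y) (\<lambda>i j k. K i j k y) a b c d)"
    for y
  have "Cinf (ball p r) f"
    unfolding f_def using g G K
    by (intro Cinf_diff Cinf_add Cinf_mult Cinf_curv Cinf_pd Cinf_curv_cross open_ball)
  moreover have "f y = \<rho> y * curv \<Gamma> a b c d y" if y: "y \<in> half_ball i0 p r" for y
  proof -
    have \<Gamma>: "\<Gamma> i j k z = G i j k z - proj_shift (\<lambda>m. pd m g z) i j k / g z"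
      if "z \<in> half_ball i0 p r" for i j k z
      using Gamma_eq[OF that] \<alpha>1 by simp
    have "g y * curv \<Gamma> a b c d y = f y"
      unfolding f_def K_def
      by (rule curv_minus_proj_shift_quotient[OF open_half_ball y Cinf_half_ball[OF g]
            Cinf_half_ball[OF G] g_nonzero \<Gamma>])
    then show ?thesis by (simp add: rho_eq_g[OF y])
  qed
  moreover have "pd m (K i j k) p = proj_shift (\<lambda>n. pd m (pd n g) p) i j k" for m i j k
    unfolding K_def by (intro pd_proj_shift Cinf_differentiable[OF Cinf_pd[OF g open_ball] centre])
  then have "f p = kd c a * (pd b (pd d g) p - (\<Sum>e\<in>UNIV. G b d e p * pd e g p))
      - kd c b * (pd a (pd d g) p - (\<Sum>e\<in>UNIV. G a d e p * pd e g p))"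
    unfolding f_def g_at_p K_def curv_cross_proj_shift G_symmetric_at_p[OF torsion_free UD, of a b c]
    using pd_commute[OF g open_ball centre, of a b] by (simp add: proj_shift_def algebra_simps)
  ultimately show ?thesis by blast
qed

end


section \<open>Extension to the boundary\<close>

text \<open>At a boundary point the value is that of some smooth local extension from the interior; by
  continuity all such extensions agree there.\<close>

definition bdry_extension :: "'n::finite \<Rightarrow> (real^'n \<Rightarrow> real) \<Rightarrow> real^'n \<Rightarrow> real" where
  "bdry_extension i0 \<Phi> x = (if x \<in> bdry i0 then
     (SOME v. \<exists>r f. 0 < r \<and> Cinf (ball x r) f \<and> (\<forall>y\<in>half_ball i0 x r. f y = \<Phi> y) \<and> v = f x)
     else \<Phi> x)"

lemma bdry_extension_eq:
  assumes p: "p \<in> bdry i0" and f: "0 < r" "Cinf (ball p r) f" "\<forall>y\<in>half_ball i0 p r. f y = \<Phi> y"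
  shows "bdry_extension i0 \<Phi> p = f p"
proof -
  let ?P = "\<lambda>v. \<exists>r f. 0 < r \<and> Cinf (ball p r) f \<and> (\<forall>y\<in>half_ball i0 p r. f y = \<Phi> y) \<and> v = f p"
  have "?P (f p)" using f by blast
  then have "?P (SOME v. ?P v)" by (rule someI)
  then obtain r' f' where f': "0 < r'" "Cinf (ball p r') f'" "\<forall>y\<in>half_ball i0 p r'. f' y = \<Phi> y"
    "(SOME v. ?P v) = f' p"
    by blast
  have "f' p = f p"
  proof (rule Cinf_eq_on_half_ball[OF f'(2) _ f(2)])
    show "p \<in> ball p r'" "p \<in> ball p r" "p $ i0 = 0" "0 < min r r'"
      using f'(1) f(1) p by (auto simp: bdry_def)
    fix x assume "x \<in> half_ball i0 p (min r r')"
    then show "f' x = f x" using f(3) f'(3) by (auto simp: half_ball_def)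
  qed
  then show ?thesis using p f'(4) by (simp add: bdry_extension_def)
qed

lemma smooth_upto_bdry_extension:
  assumes U: "openin (top_of_set (halfsp i0)) U" and interior: "Cinf (U - bdry i0) \<Phi>"
    and bdry: "\<And>p. p \<in> U \<inter> bdry i0 \<Longrightarrow> \<exists>r f. 0 < r \<and> Cinf (ball p r) f \<and> (\<forall>y\<in>half_ball i0 p r. f y = \<Phi> y)"
  shows "smooth_upto U (bdry_extension i0 \<Phi>)"
  unfolding smooth_upto_def
proof
  fix p assume p: "p \<in> U"
  show "\<exists>W g. open W \<and> p \<in> W \<and> Cinf W g \<and> (\<forall>x\<in>U \<inter> W. g x = bdry_extension i0 \<Phi> x)"
  proof (cases "p \<in> bdry i0")
    case True
    then obtain r f where f: "0 < r" "Cinf (ball p r) f" "\<forall>y\<in>half_ball i0 p r. f y = \<Phi> y"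
      using bdry p by blast
    have "f x = bdry_extension i0 \<Phi> x" if x: "x \<in> U \<inter> ball p r" for x
    proof (cases "x \<in> bdry i0")
      case True
      have sub: "ball x (r - dist p x) \<subseteq> ball p r"
      proof
        fix y assume "y \<in> ball x (r - dist p x)"
        then show "y \<in> ball p r" using dist_triangle[of p y x] by simp
      qed
      have "bdry_extension i0 \<Phi> x = f x"
      proof (rule bdry_extension_eq[OF True _ Cinf_subset[OF f(2) sub]])
        show "0 < r - dist p x" using x by simp
        show "\<forall>y\<in>half_ball i0 x (r - dist p x). f y = \<Phi> y"
          using f(3) sub by (auto simp: half_ball_def)
      qed
      then show ?thesis by simp
    next
      case False
      then have "0 < x $ i0" using x openin_subset[OF U] by (force simp: halfsp_def bdry_def)
      then show ?thesis using f(3) x False by (simp add: bdry_extension_def half_ball_def)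
    qed
    then show ?thesis using f(2) \<open>0 < r\<close> by (intro exI[of _ "ball p r"] exI[of _ f]) auto
  next
    case False
    then show ?thesis
      using interior p open_diff_bdry[OF U]
      by (intro exI[of _ "U - bdry i0"] exI[of _ \<Phi>]) (auto simp: bdry_extension_def)
  qed
qed

lemma Cinf_rho_power_curv:
  assumes D: "openin (top_of_set (halfsp i0)) D" and conn_smooth: "\<forall>i j k. Cinf (D - bdry i0) (\<Gamma> i j k)"
    and UD: "U \<subseteq> D" and rho: "ldf i0 U \<rho>"
  shows "Cinf (U - bdry i0) (\<lambda>x. \<rho> x ^ n * curv \<Gamma> a b c d x)"
proof -
  have U: "open (U - bdry i0)" using rho open_diff_bdry by (auto simp: ldf_def)
  have "smooth_upto U \<rho>" using rho by (simp add: ldf_def)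
  then have "smooth_upto (U - bdry i0) \<rho>" by (rule smooth_upto_subset) blast
  then have \<rho>: "Cinf (U - bdry i0) \<rho>" by (rule Cinf_if_smooth_upto[OF U])
  have "Cinf (D - bdry i0) (curv \<Gamma> a b c d)"
    using conn_smooth by (intro Cinf_curv[OF open_diff_bdry[OF D]]) blast
  then have "Cinf (U - bdry i0) (curv \<Gamma> a b c d)"
    by (rule Cinf_subset) (use UD in blast)
  with \<rho> show ?thesis by (intro Cinf_mult Cinf_power)
qed

lemma rho_curv_extension:
  fixes i0 :: "'n::finite"
  assumes \<alpha>1: "\<alpha> = 1" and D: "openin (top_of_set (halfsp i0)) D"
    and conn_smooth: "\<forall>i j k. Cinf (D - bdry i0) (\<Gamma> i j k)"
    and torsion_free: "\<forall>i j k. \<forall>x\<in>D - bdry i0. \<Gamma> i j k x = \<Gamma> j i k x"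
    and pc: "proj_compact i0 D \<alpha> \<Gamma>" and UD: "U \<subseteq> D" and rho: "ldf i0 U \<rho>"
  shows "\<exists>E. (\<forall>a b c d. smooth_upto U (E a b c d)) \<and>
           (\<forall>a b c d. \<forall>x\<in>U - bdry i0. E a b c d x = \<rho> x * curv \<Gamma> a b c d x) \<and>
           (\<forall>p\<in>U \<inter> bdry i0. \<forall>W g Gh.
              open W \<and> p \<in> W \<and> Cinf W g \<and> (\<forall>x\<in>U \<inter> W. g x = \<rho> x) \<and>
              (\<forall>i j k. Cinf W (Gh i j k) \<and>
                 (\<forall>x\<in>U \<inter> W - bdry i0. Gh i j k x = shiftconn \<alpha> \<rho> \<Gamma> i j k x))
              \<longrightarrow> (\<forall>a b c d. E a b c d p =
                     kd c a * (pd b (pd d g) p - (\<Sum>e\<in>UNIV. Gh b d e p * pd e g p))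
                   - kd c b * (pd a (pd d g) p - (\<Sum>e\<in>UNIV. Gh a d e p * pd e g p))))"
proof (intro exI[of _ "\<lambda>a b c d. bdry_extension i0 (\<lambda>x. \<rho> x * curv \<Gamma> a b c d x)"] conjI allI ballI impI)
  have normal_form: "\<exists>G r g. bdry_normal_form i0 U \<rho> \<alpha> \<Gamma> G p r g" if "p \<in> U \<inter> bdry i0" for p
    using proj_compact_bdry_normal_form[OF _ pc UD rho that] \<alpha>1 by simp
  fix a b c d
  show "smooth_upto U (bdry_extension i0 (\<lambda>x. \<rho> x * curv \<Gamma> a b c d x))"
  proof (rule smooth_upto_bdry_extension)
    show "openin (top_of_set (halfsp i0)) U" using rho by (simp add: ldf_def)
    show "Cinf (U - bdry i0) (\<lambda>x. \<rho> x * curv \<Gamma> a b c d x)"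
      using Cinf_rho_power_curv[OF D conn_smooth UD rho, of 1] by simp
    fix p assume "p \<in> U \<inter> bdry i0"
    then obtain G r g where "bdry_normal_form i0 U \<rho> \<alpha> \<Gamma> G p r g" using normal_form by blast
    then interpret bdry_normal_form i0 U \<rho> \<alpha> \<Gamma> G p r g .
    show "\<exists>r f. 0 < r \<and> Cinf (ball p r) f \<and> (\<forall>y\<in>half_ball i0 p r. f y = \<rho> y * curv \<Gamma> a b c d y)"
      using rho_curv_local[OF \<alpha>1 torsion_free UD, of a b c d] r by blast
  qed
  show "bdry_extension i0 (\<lambda>x. \<rho> x * curv \<Gamma> a b c d x) x = \<rho> x * curv \<Gamma> a b c d x"
    if "x \<in> U - bdry i0" for x
    using that by (simp add: bdry_extension_def)
next
  fix p W g' Gh a b c d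
  assume p: "p \<in> U \<inter> bdry i0" and W: "open W \<and> p \<in> W \<and> Cinf W g' \<and> (\<forall>x\<in>U \<inter> W. g' x = \<rho> x) \<and>
    (\<forall>i j k. Cinf W (Gh i j k) \<and> (\<forall>x\<in>U \<inter> W - bdry i0. Gh i j k x = shiftconn \<alpha> \<rho> \<Gamma> i j k x))"
  obtain G r g where "bdry_normal_form i0 U \<rho> \<alpha> \<Gamma> G p r g"
    using proj_compact_bdry_normal_form[OF _ pc UD rho p] \<alpha>1 by auto
  then interpret bdry_normal_form i0 U \<rho> \<alpha> \<Gamma> G p r g .
  obtain f where f: "Cinf (ball p r) f" "\<forall>y\<in>half_ball i0 p r. f y = \<rho> y * curv \<Gamma> a b c d y"
    and fp: "f p = kd c a * (pd b (pd d g) p - (\<Sum>e\<in>UNIV. G b d e p * pd e g p))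
      - kd c b * (pd a (pd d g) p - (\<Sum>e\<in>UNIV. G a d e p * pd e g p))"
    using rho_curv_local[OF \<alpha>1 torsion_free UD, of a b c d] by blast
  have "bdry_extension i0 (\<lambda>x. \<rho> x * curv \<Gamma> a b c d x) p = f p"
    using p by (intro bdry_extension_eq[OF _ r f]) simp
  also have "\<dots> = kd c a * (pd b (pd d g') p - (\<Sum>e\<in>UNIV. Gh b d e p * pd e g' p))
      - kd c b * (pd a (pd d g') p - (\<Sum>e\<in>UNIV. Gh a d e p * pd e g' p))"
  proof -
    have W': "open W" "p \<in> W" "Cinf W g'" "\<forall>x\<in>U \<inter> W. g' x = \<rho> x"
      and Gh: "\<And>i j k. Cinf W (Gh i j k)"
        "\<And>i j k. \<forall>x\<in>U \<inter> W - bdry i0. Gh i j k x = shiftconn \<alpha> \<rho> \<Gamma> i j k x"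
      using W by auto
    show ?thesis by (simp add: fp pd_at_p_unique[OF W'] symbols_at_p_unique[where Gh=Gh, OF W'(1,2) Gh])
  qed
  finally show "bdry_extension i0 (\<lambda>x. \<rho> x * curv \<Gamma> a b c d x) p =
      kd c a * (pd b (pd d g') p - (\<Sum>e\<in>UNIV. Gh b d e p * pd e g' p))
    - kd c b * (pd a (pd d g') p - (\<Sum>e\<in>UNIV. Gh a d e p * pd e g' p))" .
qed

lemma sq_rho_curv_extension:
  fixes i0 :: "'n::finite"
  assumes D: "openin (top_of_set (halfsp i0)) D" and conn_smooth: "\<forall>i j k. Cinf (D - bdry i0) (\<Gamma> i j k)"
    and \<alpha>: "0 < \<alpha>" and pc: "proj_compact i0 D \<alpha> \<Gamma>" and UD: "U \<subseteq> D" and rho: "ldf i0 U \<rho>"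
  shows "\<exists>E. (\<forall>a b c d. smooth_upto U (E a b c d)) \<and>
           (\<forall>a b c d. \<forall>x\<in>U - bdry i0. E a b c d x = (\<rho> x)^2 * curv \<Gamma> a b c d x) \<and>
           (\<forall>p\<in>U \<inter> bdry i0. \<forall>W g.
              open W \<and> p \<in> W \<and> Cinf W g \<and> (\<forall>x\<in>U \<inter> W. g x = \<rho> x)
              \<longrightarrow> (\<forall>a b c d. E a b c d p =
                     (1 - \<alpha>) / \<alpha>^2 * (kd c a * pd b g p * pd d g p - kd c b * pd a g p * pd d g p)))"
proof (intro exI[of _ "\<lambda>a b c d. bdry_extension i0 (\<lambda>x. (\<rho> x)\<^sup>2 * curv \<Gamma> a b c d x)"] conjI allI ballI impI)
  fix a b c d
  show "smooth_upto U (bdry_extension i0 (\<lambda>x. (\<rho> x)\<^sup>2 * curv \<Gamma> a b c d x))"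
  proof (rule smooth_upto_bdry_extension[OF _ Cinf_rho_power_curv[OF D conn_smooth UD rho]])
    show "openin (top_of_set (halfsp i0)) U" using rho by (simp add: ldf_def)
    fix p assume "p \<in> U \<inter> bdry i0"
    then obtain G r g where "bdry_normal_form i0 U \<rho> \<alpha> \<Gamma> G p r g"
      using proj_compact_bdry_normal_form[OF \<alpha> pc UD rho] by blast
    then interpret bdry_normal_form i0 U \<rho> \<alpha> \<Gamma> G p r g .
    show "\<exists>r f. 0 < r \<and> Cinf (ball p r) f \<and> (\<forall>y\<in>half_ball i0 p r. f y = (\<rho> y)\<^sup>2 * curv \<Gamma> a b c d y)"
      using sq_rho_curv_local[of a b c d] r by blast
  qed
  show "bdry_extension i0 (\<lambda>x. (\<rho> x)\<^sup>2 * curv \<Gamma> a b c d x) x = (\<rho> x)\<^sup>2 * curv \<Gamma> a b c d x"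
    if "x \<in> U - bdry i0" for x
    using that by (simp add: bdry_extension_def)
next
  fix p W g' a b c d
  assume p: "p \<in> U \<inter> bdry i0" and W: "open W \<and> p \<in> W \<and> Cinf W g' \<and> (\<forall>x\<in>U \<inter> W. g' x = \<rho> x)"
  obtain G r g where "bdry_normal_form i0 U \<rho> \<alpha> \<Gamma> G p r g"
    using proj_compact_bdry_normal_form[OF \<alpha> pc UD rho p] by blast
  then interpret bdry_normal_form i0 U \<rho> \<alpha> \<Gamma> G p r g .
  obtain f where f: "Cinf (ball p r) f" "\<forall>y\<in>half_ball i0 p r. f y = (\<rho> y)\<^sup>2 * curv \<Gamma> a b c d y"
    and fp: "f p = (1 - \<alpha>) / \<alpha>\<^sup>2 * rank_one_curv (\<lambda>m. pd m g p) a b c d"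
    using sq_rho_curv_local[of a b c d] by blast
  have ext: "bdry_extension i0 (\<lambda>x. (\<rho> x)\<^sup>2 * curv \<Gamma> a b c d x) p = f p"
    using p by (intro bdry_extension_eq[OF _ r f]) simp
  show "bdry_extension i0 (\<lambda>x. (\<rho> x)\<^sup>2 * curv \<Gamma> a b c d x) p =
      (1 - \<alpha>) / \<alpha>\<^sup>2 * (kd c a * pd b g' p * pd d g' p - kd c b * pd a g' p * pd d g' p)"
  proof -
    have W': "open W" "p \<in> W" "Cinf W g'" "\<forall>x\<in>U \<inter> W. g' x = \<rho> x" using W by auto
    show ?thesis by (simp add: ext fp rank_one_curv_def pd_at_p_unique[OF W'])
  qed
qed

theorem proposition3p2:
  fixes i0 :: "'n::finite" and D U :: "(real^'n) set"
    and \<Gamma> :: "'n \<Rightarrow> 'n \<Rightarrow> 'n \<Rightarrow> real^'n \<Rightarrow> real"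
    and \<alpha> :: real and \<rho> :: "real^'n \<Rightarrow> real"
  assumes D: "openin (top_of_set (halfsp i0)) D"
    and conn_smooth: "\<forall>i j k. Cinf (D - bdry i0) (\<Gamma> i j k)"
    and torsion_free: "\<forall>i j k. \<forall>x\<in>D - bdry i0. \<Gamma> i j k x = \<Gamma> j i k x"
    and alpha_pos: "0 < \<alpha>" and alpha_le: "\<alpha> \<le> 2"
    and pc: "proj_compact i0 D \<alpha> \<Gamma>"
    and UD: "U \<subseteq> D" and rho: "ldf i0 U \<rho>"
  shows
   "(\<alpha> = 1 \<longrightarrow>
      (\<exists>E. (\<forall>a b c d. smooth_upto U (E a b c d)) \<and>
           (\<forall>a b c d. \<forall>x\<in>U - bdry i0. E a b c d x = \<rho> x * curv \<Gamma> a b c d x) \<and>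
           (\<forall>p\<in>U \<inter> bdry i0. \<forall>W g Gh.
              open W \<and> p \<in> W \<and> Cinf W g \<and> (\<forall>x\<in>U \<inter> W. g x = \<rho> x) \<and>
              (\<forall>i j k. Cinf W (Gh i j k) \<and>
                 (\<forall>x\<in>U \<inter> W - bdry i0. Gh i j k x = shiftconn \<alpha> \<rho> \<Gamma> i j k x))
              \<longrightarrow> (\<forall>a b c d. E a b c d p =
                     kd c a * (pd b (pd d g) p - (\<Sum>e\<in>UNIV. Gh b d e p * pd e g p))
                   - kd c b * (pd a (pd d g) p - (\<Sum>e\<in>UNIV. Gh a d e p * pd e g p))))))
    \<and> (\<alpha> \<noteq> 1 \<longrightarrow>
      (\<exists>E. (\<forall>a b c d. smooth_upto U (E a b c d)) \<and>
           (\<forall>a b c d. \<forall>x\<in>U - bdry i0. E a b c d x = (\<rho> x)^2 * curv \<Gamma> a b c d x) \<and>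
           (\<forall>p\<in>U \<inter> bdry i0. \<forall>W g.
              open W \<and> p \<in> W \<and> Cinf W g \<and> (\<forall>x\<in>U \<inter> W. g x = \<rho> x)
              \<longrightarrow> (\<forall>a b c d. E a b c d p =
                     (1 - \<alpha>) / \<alpha>^2 * (kd c a * pd b g p * pd d g p - kd c b * pd a g p * pd d g p)))))"
  by (intro conjI impI rho_curv_extension[OF _ D conn_smooth torsion_free pc UD rho]
      sq_rho_curv_extension[OF D conn_smooth alpha_pos pc UD rho])

end
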